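(* A function $\phi:\mathbb{Z}\to\mathbb{H}$ is positive definite if and only if there exists a (not necessarily unique) nonnegative finite Radon measure $\mu$ on $\mathbb{S}$ such that $$\phi(n)=\int_{\mathbb{S}} s^n\,d\mu(s)\quad\text{for all } n\in\mathbb{Z}.$$
   Context: $\mathbb{H}$ is the real quaternion algebra and $\mathbb{S}=\{q\in\mathbb{H}:|q|=1\}$, the unit 3-sphere, with its usual topology. A function $\phi:\mathbb{Z}\to\mathbb{H}$ is positive definite if for all $k$, $n_1,\dots,n_k\in\mathbb{Z}$ and $q_1,\dots,q_k\in\mathbb{H}$, $\sum_{i,j=1}^k\overline{q_i}\,\phi(n_j-n_i)\,q_j$ is a nonnegative real number. The integral of the $\mathbb{H}$-valued continuous function $s\mapsto s^n$ is taken componentwise. *)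

theory Defs
  imports "HOL-Analysis.Analysis"
begin

text \<open>Real quaternions a + b i + c j + d k, represented as 4-tuples of reals.
  The product type carries the Euclidean vector-space structure
  (componentwise addition, Euclidean norm, Borel sigma-algebra).\<close>
type_synonym quat = "real \<times> real \<times> real \<times> real"

fun qmult :: "quat \<Rightarrow> quat \<Rightarrow> quat" (infixl "\<star>" 70) where
  "qmult (a1, b1, c1, d1) (a2, b2, c2, d2) =
     (a1*a2 - b1*b2 - c1*c2 - d1*d2,
      a1*b2 + b1*a2 + c1*d2 - d1*c2,
      a1*c2 - b1*d2 + c1*a2 + d1*b2,
      a1*d2 + b1*c2 - c1*b2 + d1*a2)"

fun qconj :: "quat \<Rightarrow> quat" where
  "qconj (a, b, c, d) = (a, -b, -c, -d)"

definition qone :: quat where "qone = (1, 0, 0, 0)"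

text \<open>Multiplicative inverse (q^{-1} = conj q / |q|^2; 0 for q = 0).\<close>
definition qinv :: "quat \<Rightarrow> quat" where
  "qinv q = (inverse ((norm q)^2)) *\<^sub>R qconj q"

primrec qpow :: "quat \<Rightarrow> nat \<Rightarrow> quat" where
  "qpow q 0 = qone"
| "qpow q (Suc n) = qmult (qpow q n) q"

definition qpowi :: "quat \<Rightarrow> int \<Rightarrow> quat" where
  "qpowi q n = (if 0 \<le> n then qpow q (nat n) else qpow (qinv q) (nat (- n)))"

definition qsphere :: "quat set" where
  "qsphere = {q. norm q = 1}"

definition is_nonneg_real :: "quat \<Rightarrow> bool" where
  "is_nonneg_real q \<longleftrightarrow> (\<exists>r::real. r \<ge> 0 \<and> q = (r, 0, 0, 0))"

definition positive_definite :: "(int \<Rightarrow> quat) \<Rightarrow> bool" where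
  "positive_definite \<phi> \<longleftrightarrow>
     (\<forall>(k::nat) (n::nat \<Rightarrow> int) (q::nat \<Rightarrow> quat).
        is_nonneg_real (\<Sum>i<k. \<Sum>j<k. qmult (qmult (qconj (q i)) (\<phi> (n j - n i))) (q j)))"

end

theory Submission
  imports Defs "HOL-Probability.Probability"
begin

text \<open>If \<open>\<mu>\<close> lives on the sphere, the quadratic form of its moment sequence is
  \<open>\<integral> |\<Sum>\<^sub>j s\<^bsup>n\<^sub>j\<^esup> q\<^sub>j|\<^sup>2 d\<mu>(s) \<ge> 0\<close>.

  Conversely write \<open>\<phi>(n) = a(n) + v(n)\<close> with \<open>a\<close> real and \<open>v\<close> imaginary.  Testing positive
  definiteness with \<open>q\<^sub>j = cos (j t) + u sin (j t)\<close>, \<open>u\<close> a unit imaginary quaternion, shows that the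
  Fejer sums of \<open>a\<close> and of the three coordinates of \<open>v\<close> lie in a Lorentz cone for every \<open>t\<close>.
  As in Herglotz's theorem, the normalised Fejer measures have weak limits \<open>\<Lambda>\<^sub>0, \<dots>, \<Lambda>\<^sub>3\<close> on the
  circle with cosine moments \<open>a(n)/a(0)\<close> and sine moments \<open>v\<^sub>c(n)/a(0)\<close>, and the cone condition
  makes \<open>\<Lambda>\<^sub>c - \<Lambda>\<^sub>0 = W\<^sub>c \<Lambda>\<^sub>0\<close> with \<open>|W| \<le> 1\<close>.  Mixing the two circles
  \<open>t \<mapsto> cos t \<plusminus> (W/|W|) sin t\<close> of the sphere with weights \<open>a(0) (1 \<plusminus> |W|)/2\<close> then realises
  \<open>\<phi>\<close> as a moment sequence.\<close>

section \<open>Quaternion arithmetic\<close>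

lemma norm_quat_power2: "(norm ((a, b, c, d) :: quat))\<^sup>2 = a\<^sup>2 + b\<^sup>2 + c\<^sup>2 + d\<^sup>2"
  by (simp add: norm_Pair)

lemma norm_quat: "norm ((a, b, c, d) :: quat) = sqrt (a\<^sup>2 + b\<^sup>2 + c\<^sup>2 + d\<^sup>2)"
  by (simp add: norm_Pair)

lemma qmult_assoc: "qmult (qmult p q) r = qmult p (qmult q r)"
  by (cases p rule: prod_cases4; cases q rule: prod_cases4; cases r rule: prod_cases4)
     (simp add: algebra_simps)

lemma qconj_qmult: "qconj (qmult p q) = qmult (qconj q) (qconj p)"
  by (cases p rule: prod_cases4; cases q rule: prod_cases4) (simp add: algebra_simps)

lemma qconj_qconj [simp]: "qconj (qconj p) = p"
  by (cases p rule: prod_cases4) simp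

lemma qmult_qone_left [simp]: "qmult qone p = p"
  by (cases p rule: prod_cases4) (simp add: qone_def)

lemma qmult_qone_right [simp]: "qmult p qone = p"
  by (cases p rule: prod_cases4) (simp add: qone_def)

lemma qconj_qone [simp]: "qconj qone = qone"
  by (simp add: qone_def)

lemma qmult_zero_left [simp]: "qmult 0 p = 0"
  by (cases p rule: prod_cases4) (simp add: zero_prod_def)

lemma qmult_zero_right [simp]: "qmult p 0 = 0"
  by (cases p rule: prod_cases4) (simp add: zero_prod_def)

lemma qconj_zero [simp]: "qconj 0 = 0"
  by (simp add: zero_prod_def)

lemma qmult_add_left: "qmult (p + q) r = qmult p r + qmult q r"
  by (cases p rule: prod_cases4; cases q rule: prod_cases4; cases r rule: prod_cases4)
     (simp add: algebra_simps)

lemma qmult_add_right: "qmult r (p + q) = qmult r p + qmult r q"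
  by (cases p rule: prod_cases4; cases q rule: prod_cases4; cases r rule: prod_cases4)
     (simp add: algebra_simps)

lemma qmult_scaleR_left: "qmult (c *\<^sub>R p) r = c *\<^sub>R qmult p r"
  by (cases p rule: prod_cases4; cases r rule: prod_cases4) (simp add: algebra_simps)

lemma qmult_scaleR_right: "qmult r (c *\<^sub>R p) = c *\<^sub>R qmult r p"
  by (cases p rule: prod_cases4; cases r rule: prod_cases4) (simp add: algebra_simps)

lemma qconj_add: "qconj (p + q) = qconj p + qconj q"
  by (cases p rule: prod_cases4; cases q rule: prod_cases4) simp

lemma qconj_sum: "qconj (\<Sum>i\<in>A. f i) = (\<Sum>i\<in>A. qconj (f i))"
  by (induction A rule: infinite_finite_induct) (auto simp: qconj_add)

lemma qmult_sum_left: "qmult (\<Sum>i\<in>A. f i) r = (\<Sum>i\<in>A. qmult (f i) r)"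
  by (induction A rule: infinite_finite_induct) (auto simp: qmult_add_left)

lemma qmult_sum_right: "qmult r (\<Sum>i\<in>A. f i) = (\<Sum>i\<in>A. qmult r (f i))"
  by (induction A rule: infinite_finite_induct) (auto simp: qmult_add_right)

lemma bounded_linear_qmult_left: "bounded_linear (\<lambda>x. qmult c x)"
  by (rule linear_conv_bounded_linear[THEN iffD1], rule linearI)
     (simp_all add: qmult_add_right qmult_scaleR_right)

lemma bounded_linear_qmult_right: "bounded_linear (\<lambda>x. qmult x c)"
  by (rule linear_conv_bounded_linear[THEN iffD1], rule linearI)
     (simp_all add: qmult_add_left qmult_scaleR_left)

lemma qmult_qconj_left: "qmult (qconj p) p = ((norm p)\<^sup>2, 0, 0, 0)"
  by (cases p rule: prod_cases4) (simp add: norm_quat_power2, simp add: algebra_simps power2_eq_square)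

lemma qmult_qconj_right: "qmult p (qconj p) = ((norm p)\<^sup>2, 0, 0, 0)"
  by (cases p rule: prod_cases4) (simp add: norm_quat_power2, simp add: algebra_simps power2_eq_square)

lemma norm_qmult: "norm (qmult p q) = norm p * norm q"
proof -
  have "(norm (qmult p q))\<^sup>2 = (norm p * norm q)\<^sup>2"
  proof -
    obtain a b c d where p: "p = (a, b, c, d)" by (cases p rule: prod_cases4)
    obtain e f g h where q: "q = (e, f, g, h)" by (cases q rule: prod_cases4)
    show ?thesis unfolding p q qmult.simps norm_quat_power2 power_mult_distrib by algebra
  qed
  then show ?thesis by (simp add: power2_eq_iff_nonneg)
qed

lemma norm_qconj [simp]: "norm (qconj p) = norm p"
  by (cases p rule: prod_cases4) (simp add: norm_quat)

lemma norm_qone [simp]: "norm qone = 1"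
  by (simp add: qone_def norm_quat)

lemma qinv_unit: "norm s = 1 \<Longrightarrow> qinv s = qconj s"
  by (simp add: qinv_def)

lemma qmult_qconj_unit:
  assumes "norm s = 1"
  shows "qmult (qconj s) s = qone" and "qmult s (qconj s) = qone"
  using assms by (simp_all add: qmult_qconj_left qmult_qconj_right qone_def)

lemma qconj_unique_inverse:
  assumes "qmult x y = qone" and "norm x = 1"
  shows "y = qconj x"
proof -
  have "y = qmult (qmult (qconj x) x) y" using assms by (simp add: qmult_qconj_unit)
  also have "\<dots> = qconj x" using assms by (simp add: qmult_assoc)
  finally show ?thesis .
qed

lemma norm_qpowi_unit: "norm s = 1 \<Longrightarrow> norm (qpowi s n) = 1"
proof -
  assume "norm s = 1"
  moreover have "norm s = 1 \<Longrightarrow> norm (qpow s k) = 1" for s k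
    by (induction k) (auto simp: norm_qmult)
  ultimately show ?thesis by (auto simp: qpowi_def qinv_unit)
qed

lemma qpowi_0 [simp]: "qpowi s 0 = qone"
  by (simp add: qpowi_def)

lemma qpowi_plus_1:
  assumes "norm s = 1"
  shows "qpowi s (n + 1) = qmult (qpowi s n) s"
proof (cases "n \<ge> 0")
  case True
  then have "nat (n + 1) = Suc (nat n)" by simp
  then show ?thesis using True by (simp add: qpowi_def)
next
  case False
  define k where "k = nat (- n - 1)"
  have k: "n = - int k - 1" and nat_minus_n: "nat (- n) = Suc k"
    using False by (simp_all add: k_def)
  show ?thesis
  proof (cases "k = 0")
    case True
    then show ?thesis using k assms by (simp add: qpowi_def qinv_unit qmult_qconj_unit)
  next
    case False
    then have "n + 1 < 0" using k by simp
    moreover have "nat (- (n + 1)) = k" using k by simp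
    ultimately have "qpowi s (n + 1) = qpow (qconj s) k"
      using assms by (simp add: qpowi_def qinv_unit)
    moreover have "qpowi s n = qmult (qpow (qconj s) k) (qconj s)"
      using assms \<open>n + 1 < 0\<close> by (simp add: qpowi_def qinv_unit nat_minus_n)
    ultimately show ?thesis using assms by (simp add: qmult_assoc qmult_qconj_unit)
  qed
qed

lemma qpowi_add:
  assumes "norm s = 1"
  shows "qpowi s (n + m) = qmult (qpowi s n) (qpowi s m)"
proof (induction m rule: int_induct[where k = 0])
  case base
  then show ?case by simp
next
  case (step1 i)
  then show ?case using qpowi_plus_1[OF assms, of "n + i"] qpowi_plus_1[OF assms, of i]
    by (simp add: add.assoc[symmetric] qmult_assoc)
next
  case (step2 i)
  have "qpowi s (i - 1) = qmult (qpowi s i) (qconj s)"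
    using qpowi_plus_1[OF assms, of "i - 1"] assms by (simp add: qmult_assoc qmult_qconj_unit)
  moreover have "qpowi s (n + (i - 1)) = qmult (qpowi s (n + i)) (qconj s)"
    using qpowi_plus_1[OF assms, of "n + i - 1"] assms
    by (simp add: qmult_assoc qmult_qconj_unit algebra_simps)
  ultimately show ?case using step2 by (simp add: qmult_assoc)
qed

lemma qpowi_uminus:
  assumes "norm s = 1"
  shows "qpowi s (- n) = qconj (qpowi s n)"
  using qconj_unique_inverse[of "qpowi s n" "qpowi s (- n)"] qpowi_add[OF assms, of n "- n"]
    norm_qpowi_unit[OF assms] by simp

lemma qpowi_diff:
  assumes "norm s = 1"
  shows "qpowi s (m - n) = qmult (qconj (qpowi s n)) (qpowi s m)"
  using qpowi_add[OF assms, of "- n" m] qpowi_uminus[OF assms, of n] by simp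

lemma qmult_eq_components:
  "qmult p q =
    (fst p * fst q - fst (snd p) * fst (snd q) - fst (snd (snd p)) * fst (snd (snd q))
       - snd (snd (snd p)) * snd (snd (snd q)),
     fst p * fst (snd q) + fst (snd p) * fst q + fst (snd (snd p)) * snd (snd (snd q))
       - snd (snd (snd p)) * fst (snd (snd q)),
     fst p * fst (snd (snd q)) - fst (snd p) * snd (snd (snd q)) + fst (snd (snd p)) * fst q
       + snd (snd (snd p)) * fst (snd q),
     fst p * snd (snd (snd q)) + fst (snd p) * fst (snd (snd q)) - fst (snd (snd p)) * fst (snd q)
       + snd (snd (snd p)) * fst q)"
  by (cases p rule: prod_cases4; cases q rule: prod_cases4) simp

lemma qconj_eq_components: "qconj p = (fst p, - fst (snd p), - fst (snd (snd p)), - snd (snd (snd p)))"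
  by (cases p rule: prod_cases4) simp

lemma borel_measurable_fst_comp [measurable (raw)]:
  fixes f :: "'a \<Rightarrow> 'b::second_countable_topology \<times> 'c::second_countable_topology"
  shows "f \<in> borel_measurable M \<Longrightarrow> (\<lambda>x. fst (f x)) \<in> borel_measurable M"
  by (rule borel_measurable_continuous_on[OF continuous_on_fst[OF continuous_on_id]])

lemma borel_measurable_snd_comp [measurable (raw)]:
  fixes f :: "'a \<Rightarrow> 'b::second_countable_topology \<times> 'c::second_countable_topology"
  shows "f \<in> borel_measurable M \<Longrightarrow> (\<lambda>x. snd (f x)) \<in> borel_measurable M"
  by (rule borel_measurable_continuous_on[OF continuous_on_snd[OF continuous_on_id]])

lemma borel_measurable_qmult [measurable]:
  assumes [measurable]: "f \<in> borel_measurable M" "g \<in> borel_measurable M"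
  shows "(\<lambda>x. qmult (f x) (g x)) \<in> borel_measurable M"
  unfolding qmult_eq_components by measurable

lemma borel_measurable_qconj [measurable]:
  assumes [measurable]: "f \<in> borel_measurable M"
  shows "(\<lambda>x. qconj (f x)) \<in> borel_measurable M"
  unfolding qconj_eq_components by measurable

lemma borel_measurable_qpowi [measurable]:
  assumes [measurable]: "f \<in> borel_measurable M"
  shows "(\<lambda>x. qpowi (f x) n) \<in> borel_measurable M"
proof -
  have [measurable]: "(\<lambda>x. qpow (g x) k) \<in> borel_measurable M" if [measurable]: "g \<in> borel_measurable M" for g k
    by (induction k) (simp_all add: qone_def)
  show ?thesis unfolding qpowi_def qinv_def by (cases "0 \<le> n") simp_all
qed

section \<open>Measures on the sphere\<close>

definition sphere_measure :: "quat measure \<Rightarrow> bool" where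
  "sphere_measure \<mu> \<longleftrightarrow> sets \<mu> = sets borel \<and> finite_measure \<mu> \<and> emeasure \<mu> (- qsphere) = 0"

lemma closed_qsphere: "closed qsphere"
  unfolding qsphere_def by (rule closed_Collect_eq) (auto intro: continuous_intros)

lemma AE_sphere_measure:
  assumes "sphere_measure \<mu>"
  shows "AE s in \<mu>. norm s = 1"
  using assms unfolding sphere_measure_def
  by (intro AE_I[where N = "- qsphere"]) (auto simp: qsphere_def intro!: borel_open open_Compl closed_qsphere)

lemma integrable_qpowi_sphere_measure:
  assumes "sphere_measure \<mu>"
  shows "integrable \<mu> (\<lambda>s. qpowi s n)"
proof -
  interpret finite_measure \<mu> using assms by (simp add: sphere_measure_def)
  have "sets \<mu> = sets borel" using assms by (simp add: sphere_measure_def)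
  then show ?thesis
    using AE_sphere_measure[OF assms]
    by (intro integrable_const_bound[where B = 1])
       (auto simp: norm_qpowi_unit measurable_cong_sets[OF \<open>sets \<mu> = sets borel\<close> refl])
qed

lemma integral_quat_components:
  fixes f :: "'a \<Rightarrow> quat"
  assumes "integrable M f"
  shows "integral\<^sup>L M f =
    (integral\<^sup>L M (\<lambda>x. fst (f x)), integral\<^sup>L M (\<lambda>x. fst (snd (f x))),
     integral\<^sup>L M (\<lambda>x. fst (snd (snd (f x)))), integral\<^sup>L M (\<lambda>x. snd (snd (snd (f x)))))"
  using assms by (simp add: integrable_snd)

lemma quadratic_form_qpowi_unit:
  assumes "norm s = 1"
  shows "(\<Sum>i<k. \<Sum>j<k. qmult (qmult (qconj (q i)) (qpowi s (n j - n i))) (q j))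
    = ((norm (\<Sum>j<k. qmult (qpowi s (n j)) (q j)))\<^sup>2, 0, 0, 0)"
proof -
  have "(\<Sum>i<k. \<Sum>j<k. qmult (qmult (qconj (q i)) (qpowi s (n j - n i))) (q j))
      = (\<Sum>i<k. \<Sum>j<k. qmult (qconj (qmult (qpowi s (n i)) (q i))) (qmult (qpowi s (n j)) (q j)))"
    by (simp add: qpowi_diff[OF assms] qconj_qmult qmult_assoc)
  also have "\<dots> = qmult (qconj (\<Sum>j<k. qmult (qpowi s (n j)) (q j))) (\<Sum>j<k. qmult (qpowi s (n j)) (q j))"
    by (simp only: qconj_sum qmult_sum_left) (simp only: qmult_sum_right)
  finally show ?thesis by (simp add: qmult_qconj_left)
qed

lemma
  assumes "sphere_measure \<mu>"
  shows integrable_qmult_qpowi: "integrable \<mu> (\<lambda>s. qmult (qmult c (qpowi s m)) d)"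
    and integral_qmult_qpowi:
      "integral\<^sup>L \<mu> (\<lambda>s. qmult (qmult c (qpowi s m)) d) = qmult (qmult c (integral\<^sup>L \<mu> (\<lambda>s. qpowi s m))) d"
proof -
  note int = integrable_qpowi_sphere_measure[OF assms]
  show "integrable \<mu> (\<lambda>s. qmult (qmult c (qpowi s m)) d)"
    by (intro integrable_bounded_linear[OF bounded_linear_qmult_right]
        integrable_bounded_linear[OF bounded_linear_qmult_left] int)
  show "integral\<^sup>L \<mu> (\<lambda>s. qmult (qmult c (qpowi s m)) d) = qmult (qmult c (integral\<^sup>L \<mu> (\<lambda>s. qpowi s m))) d"
    using integral_bounded_linear[OF bounded_linear_qmult_right, of \<mu> "\<lambda>s. qmult c (qpowi s m)" d]
      integral_bounded_linear[OF bounded_linear_qmult_left int, of c]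
      integrable_bounded_linear[OF bounded_linear_qmult_left int, of c]
    by simp
qed

lemma positive_definite_moments:
  assumes \<mu>: "sphere_measure \<mu>"
  shows "positive_definite (\<lambda>n. integral\<^sup>L \<mu> (\<lambda>s. qpowi s n))"
  unfolding positive_definite_def
proof (intro allI)
  fix k :: nat and n :: "nat \<Rightarrow> int" and q :: "nat \<Rightarrow> quat"
  have sets: "sets \<mu> = sets borel" using \<mu> by (simp add: sphere_measure_def)
  define G where "G s = (\<Sum>i<k. \<Sum>j<k. qmult (qmult (qconj (q i)) (qpowi s (n j - n i))) (q j))" for s
  define X where "X s = (\<Sum>j<k. qmult (qpowi s (n j)) (q j))" for s
  have G: "AE s in \<mu>. G s = ((norm (X s))\<^sup>2, 0, 0, 0)"
    using AE_sphere_measure[OF \<mu>] by eventually_elim (simp add: G_def X_def quadratic_form_qpowi_unit)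
  have G_int: "integrable \<mu> G"
    unfolding G_def by (simp add: integrable_qmult_qpowi[OF \<mu>])
  have meas: "(\<lambda>s. ((norm (X s))\<^sup>2, 0::real, 0::real, 0::real)) \<in> borel_measurable \<mu>"
    unfolding X_def measurable_cong_sets[OF sets refl] by measurable
  have "(\<Sum>i<k. \<Sum>j<k. qmult (qmult (qconj (q i)) (integral\<^sup>L \<mu> (\<lambda>s. qpowi s (n j - n i)))) (q j))
      = integral\<^sup>L \<mu> G"
    unfolding G_def by (simp add: integrable_qmult_qpowi[OF \<mu>] integral_qmult_qpowi[OF \<mu>])
  also have "\<dots> = integral\<^sup>L \<mu> (\<lambda>s. ((norm (X s))\<^sup>2, 0, 0, 0))"
    using G_int G meas by (intro integral_cong_AE) auto
  also have "\<dots> = (integral\<^sup>L \<mu> (\<lambda>s. (norm (X s))\<^sup>2), 0, 0, 0)"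
    using integrable_cong_AE_imp[OF G_int meas G] by (subst integral_quat_components) auto
  finally show "is_nonneg_real (\<Sum>i<k. \<Sum>j<k.
      qmult (qmult (qconj (q i)) (integral\<^sup>L \<mu> (\<lambda>s. qpowi s (n j - n i)))) (q j))"
    unfolding is_nonneg_real_def by auto
qed

lemma positive_definiteD:
  fixes k :: nat and n :: "nat \<Rightarrow> int" and q :: "nat \<Rightarrow> quat"
  assumes "positive_definite \<phi>"
  shows "\<exists>r\<ge>0. (\<Sum>i<k. \<Sum>j<k. qmult (qmult (qconj (q i)) (\<phi> (n j - n i))) (q j)) = (r, 0, 0, 0)"
  using assms unfolding positive_definite_def is_nonneg_real_def by blast

lemma positive_definite_at_0:
  assumes "positive_definite \<phi>"
  shows "\<exists>r\<ge>0. \<phi> 0 = (r, 0, 0, 0)"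
  using positive_definiteD[OF assms, where k = 1 and q = "\<lambda>_. qone" and n = "\<lambda>_. 0"] by simp

lemma positive_definite_two_points:
  assumes "positive_definite \<phi>"
  shows "\<exists>r\<ge>0. \<phi> 0 + qmult (\<phi> m) y + qmult (qconj y) (\<phi> (- m)) + qmult (qmult (qconj y) (\<phi> 0)) y
    = (r, 0, 0, 0)"
proof -
  define q :: "nat \<Rightarrow> quat" where "q i = (if i = 0 then qone else y)" for i
  define n :: "nat \<Rightarrow> int" where "n i = (if i = 0 then 0 else m)" for i
  have "(\<Sum>i<2. \<Sum>j<2. qmult (qmult (qconj (q i)) (\<phi> (n j - n i))) (q j))
     = \<phi> 0 + qmult (\<phi> m) y + qmult (qconj y) (\<phi> (- m)) + qmult (qmult (qconj y) (\<phi> 0)) y"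
    by (simp add: numeral_2_eq_2 q_def n_def add.assoc)
  then show ?thesis using positive_definiteD[OF assms, where k = 2 and q = q and n = n] by auto
qed

lemma positive_definite_uminus:
  assumes "positive_definite \<phi>"
  shows "\<phi> (- m) = qconj (\<phi> m)"
proof -
  obtain r where r: "\<phi> 0 = (r, 0, 0, 0)" using positive_definite_at_0[OF assms] by blast
  obtain x0 x1 x2 x3 where x: "\<phi> m = (x0, x1, x2, x3)" by (cases "\<phi> m" rule: prod_cases4)
  obtain z0 z1 z2 z3 where z: "\<phi> (- m) = (z0, z1, z2, z3)" by (cases "\<phi> (- m)" rule: prod_cases4)
  obtain a where a: "\<phi> 0 + qmult (\<phi> m) qone + qmult (qconj qone) (\<phi> (- m))
      + qmult (qmult (qconj qone) (\<phi> 0)) qone = (a, 0, 0, 0)"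
    using positive_definite_two_points[OF assms] by blast
  obtain b where b: "\<phi> 0 + qmult (\<phi> m) (0, 1, 0, 0) + qmult (qconj (0, 1, 0, 0)) (\<phi> (- m))
      + qmult (qmult (qconj (0, 1, 0, 0)) (\<phi> 0)) (0, 1, 0, 0) = (b, 0, 0, 0)"
    using positive_definite_two_points[OF assms] by blast
  obtain c where c: "\<phi> 0 + qmult (\<phi> m) (0, 0, 1, 0) + qmult (qconj (0, 0, 1, 0)) (\<phi> (- m))
      + qmult (qmult (qconj (0, 0, 1, 0)) (\<phi> 0)) (0, 0, 1, 0) = (c, 0, 0, 0)"
    using positive_definite_two_points[OF assms] by blast
  show ?thesis using a b c unfolding x z r by (simp add: qone_def)
qed

lemma positive_definite_vanishing:
  assumes "positive_definite \<phi>" and "\<phi> 0 = 0"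
  shows "\<phi> m = 0"
proof -
  obtain x0 x1 x2 x3 where x: "\<phi> m = (x0, x1, x2, x3)" by (cases "\<phi> m" rule: prod_cases4)
  obtain r where r: "r \<ge> 0"
    "\<phi> 0 + qmult (\<phi> m) (- qconj (\<phi> m)) + qmult (qconj (- qconj (\<phi> m))) (\<phi> (- m))
      + qmult (qmult (qconj (- qconj (\<phi> m))) (\<phi> 0)) (- qconj (\<phi> m)) = (r, 0, 0, 0)"
    using positive_definite_two_points[OF assms(1)] by blast
  have "- 2 * (x0\<^sup>2 + x1\<^sup>2 + x2\<^sup>2 + x3\<^sup>2) = r"
    using r(2) unfolding positive_definite_uminus[OF assms(1)] assms(2) x by (simp add: power2_eq_square)
  then have "x0\<^sup>2 + x1\<^sup>2 + x2\<^sup>2 + x3\<^sup>2 = 0"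
    using r(1) by (smt (verit) sum_power2_ge_zero zero_le_power2)
  then show ?thesis using x by (simp add: add_nonneg_eq_0_iff zero_prod_def)
qed

section \<open>Fejer sums\<close>

text \<open>\<open>qim 1\<close>, \<open>qim 2\<close>, \<open>qim 3\<close> are the \<open>i\<close>-, \<open>j\<close>-, \<open>k\<close>-coordinates; the index \<open>0\<close> gives the zero
  function, so that \<open>c < 4\<close> indexes the cosine sum together with the three mixed sums below.\<close>
definition qim :: "nat \<Rightarrow> quat \<Rightarrow> real" where
  "qim c q = (if c = 1 then fst (snd q) else if c = 2 then fst (snd (snd q))
    else if c = 3 then snd (snd (snd q)) else 0)"

lemma quat_eq_qim: "q = (fst q, qim 1 q, qim 2 q, qim 3 q)"
  by (simp add: qim_def)

lemma qim_0 [simp]: "qim 0 q = 0"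
  by (simp add: qim_def)

lemma qim_qconj: "qim c (qconj q) = - qim c q"
  by (cases q rule: prod_cases4) (simp add: qim_def)

definition fejer_sum :: "nat \<Rightarrow> (int \<Rightarrow> real) \<Rightarrow> (int \<Rightarrow> real) \<Rightarrow> real \<Rightarrow> real" where
  "fejer_sum N g h t = (\<Sum>i<N. \<Sum>j<N. g (int j - int i) * cos (of_int (int j - int i) * t)
                                    + h (int j - int i) * sin (of_int (int j - int i) * t))"

lemma fejer_sum_scale: "fejer_sum N (\<lambda>m. c * g m) (\<lambda>m. c * h m) t = c * fejer_sum N g h t"
  unfolding fejer_sum_def by (simp add: sum_distrib_left algebra_simps)

lemma fejer_sum_combination:
  "fejer_sum N (\<lambda>m. r * g m) (\<lambda>m. w1 * h1 m + w2 * h2 m + w3 * h3 m) t =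
     r * fejer_sum N g (\<lambda>_. 0) t + w1 * (fejer_sum N g h1 t - fejer_sum N g (\<lambda>_. 0) t)
     + w2 * (fejer_sum N g h2 t - fejer_sum N g (\<lambda>_. 0) t) + w3 * (fejer_sum N g h3 t - fejer_sum N g (\<lambda>_. 0) t)"
  unfolding fejer_sum_def
  by (simp add: sum_distrib_left sum_subtractf[symmetric] sum.distrib[symmetric] algebra_simps)

lemma continuous_on_fejer_sum: "continuous_on A (fejer_sum N g h)"
  unfolding fejer_sum_def by (intro continuous_intros)

lemma fst_qconj_circle_qmult_circle:
  assumes "u1\<^sup>2 + u2\<^sup>2 + u3\<^sup>2 = (1::real)"
  shows "fst (qmult (qmult (qconj (cos a, u1 * sin a, u2 * sin a, u3 * sin a)) (x0, x1, x2, x3))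
      (cos b, u1 * sin b, u2 * sin b, u3 * sin b))
    = x0 * cos (b - a) - (x1 * u1 + x2 * u2 + x3 * u3) * sin (b - a)"
proof -
  have "fst (qmult (qmult (qconj (cos a, u1 * sin a, u2 * sin a, u3 * sin a)) (x0, x1, x2, x3))
      (cos b, u1 * sin b, u2 * sin b, u3 * sin b))
     = x0 * (cos b * cos a + (u1\<^sup>2 + u2\<^sup>2 + u3\<^sup>2) * sin b * sin a)
       - (x1 * u1 + x2 * u2 + x3 * u3) * (sin b * cos a - cos b * sin a)"
    by (simp add: algebra_simps power2_eq_square)
  then show ?thesis using assms by (simp add: cos_diff sin_diff)
qed

text \<open>The quadratic form evaluated at \<open>q\<^sub>j = cos (j t) + u sin (j t)\<close>, \<open>u\<close> a unit imaginary
  quaternion, has as real part a Fejer-type trigonometric sum.\<close>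
lemma positive_definite_fejer_sum_unit:
  assumes pd: "positive_definite \<phi>" and u: "u1\<^sup>2 + u2\<^sup>2 + u3\<^sup>2 = (1::real)"
  shows "0 \<le> fejer_sum N (\<lambda>m. fst (\<phi> m))
    (\<lambda>m. - (u1 * qim 1 (\<phi> m) + u2 * qim 2 (\<phi> m) + u3 * qim 3 (\<phi> m))) t"
proof -
  define q :: "nat \<Rightarrow> quat" where
    "q j = (cos (real j * t), u1 * sin (real j * t), u2 * sin (real j * t), u3 * sin (real j * t))" for j
  obtain r where "r \<ge> 0" and r: "(\<Sum>i<N. \<Sum>j<N. qmult (qmult (qconj (q i)) (\<phi> (int j - int i))) (q j)) = (r, 0, 0, 0)"
    using positive_definiteD[OF pd, where k = N and q = q and n = int] by blast
  have "fejer_sum N (\<lambda>m. fst (\<phi> m)) (\<lambda>m. - (u1 * qim 1 (\<phi> m) + u2 * qim 2 (\<phi> m) + u3 * qim 3 (\<phi> m))) t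
      = fst (\<Sum>i<N. \<Sum>j<N. qmult (qmult (qconj (q i)) (\<phi> (int j - int i))) (q j))"
    unfolding fejer_sum_def fst_sum
  proof (intro sum.cong refl)
    fix i j
    obtain x0 x1 x2 x3 where x: "\<phi> (int j - int i) = (x0, x1, x2, x3)"
      by (cases "\<phi> (int j - int i)" rule: prod_cases4)
    have "real j * t - real i * t = of_int (int j - int i) * t" by (simp add: algebra_simps)
    then show "fst (\<phi> (int j - int i)) * cos (of_int (int j - int i) * t) +
        - (u1 * qim 1 (\<phi> (int j - int i)) + u2 * qim 2 (\<phi> (int j - int i)) + u3 * qim 3 (\<phi> (int j - int i))) *
        sin (of_int (int j - int i) * t) =
        fst (qmult (qmult (qconj (q i)) (\<phi> (int j - int i))) (q j))"
      unfolding q_def x fst_qconj_circle_qmult_circle[OF u] by (simp add: qim_def algebra_simps)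
  qed
  then show ?thesis using r \<open>r \<ge> 0\<close> by simp
qed

lemma positive_definite_fejer_sum:
  assumes pd: "positive_definite \<phi>"
  shows "0 \<le> fejer_sum N (\<lambda>m. sqrt (w1\<^sup>2 + w2\<^sup>2 + w3\<^sup>2) * fst (\<phi> m))
    (\<lambda>m. w1 * qim 1 (\<phi> m) + w2 * qim 2 (\<phi> m) + w3 * qim 3 (\<phi> m)) t"
proof (cases "w1\<^sup>2 + w2\<^sup>2 + w3\<^sup>2 = 0")
  case True
  then have "w1 = 0" "w2 = 0" "w3 = 0" by (auto simp: add_nonneg_eq_0_iff)
  then show ?thesis by (simp add: fejer_sum_def)
next
  case False
  define r where "r = sqrt (w1\<^sup>2 + w2\<^sup>2 + w3\<^sup>2)"
  have "0 < w1\<^sup>2 + w2\<^sup>2 + w3\<^sup>2"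
    using False by (metis add_nonneg_nonneg less_eq_real_def zero_le_power2)
  then have r: "r > 0" by (simp add: r_def)
  have u: "(- w1 / r)\<^sup>2 + (- w2 / r)\<^sup>2 + (- w3 / r)\<^sup>2 = 1"
    using r False by (simp add: r_def power_divide add_divide_distrib[symmetric])
  have "0 \<le> r * fejer_sum N (\<lambda>m. fst (\<phi> m))
      (\<lambda>m. - ((- w1 / r) * qim 1 (\<phi> m) + (- w2 / r) * qim 2 (\<phi> m) + (- w3 / r) * qim 3 (\<phi> m))) t"
    using positive_definite_fejer_sum_unit[OF pd u] r by simp
  also have "\<dots> = fejer_sum N (\<lambda>m. r * fst (\<phi> m))
      (\<lambda>m. r * - ((- w1 / r) * qim 1 (\<phi> m) + (- w2 / r) * qim 2 (\<phi> m) + (- w3 / r) * qim 3 (\<phi> m))) t"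
    by (rule fejer_sum_scale[symmetric])
  also have "(\<lambda>m. r * - ((- w1 / r) * qim 1 (\<phi> m) + (- w2 / r) * qim 2 (\<phi> m) + (- w3 / r) * qim 3 (\<phi> m)))
      = (\<lambda>m. w1 * qim 1 (\<phi> m) + w2 * qim 2 (\<phi> m) + w3 * qim 3 (\<phi> m))"
    using r by (auto simp: field_simps)
  finally show ?thesis by (simp add: r_def)
qed

text \<open>The Lorentz cone \<open>d\<^sub>1\<^sup>2 + d\<^sub>2\<^sup>2 + d\<^sub>3\<^sup>2 \<le> t\<^sup>2, t \<ge> 0\<close>, written by its defining half-spaces,
  which are linear in \<open>(t, d)\<close> and so pass to limits and integrals.\<close>
definition lorentz_cone :: "real \<Rightarrow> real \<Rightarrow> real \<Rightarrow> real \<Rightarrow> bool" where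
  "lorentz_cone t d1 d2 d3 \<longleftrightarrow>
    (\<forall>w1 w2 w3. 0 \<le> sqrt (w1\<^sup>2 + w2\<^sup>2 + w3\<^sup>2) * t + w1 * d1 + w2 * d2 + w3 * d3)"

lemma lorentz_cone_tendsto:
  assumes "\<And>k. lorentz_cone (t k) (d1 k) (d2 k) (d3 k)"
    and "t \<longlonglongrightarrow> t0" "d1 \<longlonglongrightarrow> e1" "d2 \<longlonglongrightarrow> e2" "d3 \<longlonglongrightarrow> e3"
  shows "lorentz_cone t0 e1 e2 e3"
  unfolding lorentz_cone_def
proof (intro allI)
  fix w1 w2 w3 :: real
  have "(\<lambda>k. sqrt (w1\<^sup>2 + w2\<^sup>2 + w3\<^sup>2) * t k + w1 * d1 k + w2 * d2 k + w3 * d3 k)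
      \<longlonglongrightarrow> sqrt (w1\<^sup>2 + w2\<^sup>2 + w3\<^sup>2) * t0 + w1 * e1 + w2 * e2 + w3 * e3"
    using assms(2-5) by (intro tendsto_intros)
  then show "0 \<le> sqrt (w1\<^sup>2 + w2\<^sup>2 + w3\<^sup>2) * t0 + w1 * e1 + w2 * e2 + w3 * e3"
    using assms(1) by (intro LIMSEQ_le_const) (auto simp: lorentz_cone_def)
qed

lemma unit_ball_of_rat_halfspaces:
  fixes d1 d2 d3 :: real
  assumes "\<And>q1 q2 q3 :: rat. 0 \<le> sqrt ((of_rat q1)\<^sup>2 + (of_rat q2)\<^sup>2 + (of_rat q3)\<^sup>2)
    + of_rat q1 * d1 + of_rat q2 * d2 + of_rat q3 * d3"
  shows "d1\<^sup>2 + d2\<^sup>2 + d3\<^sup>2 \<le> 1"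
proof -
  have "\<exists>Y :: nat \<Rightarrow> rat. (\<lambda>n. of_rat (Y n)) \<longlonglongrightarrow> y" for y :: real
  proof -
    have "y \<in> closure \<rat>" by (simp add: Rats_closure_real)
    then obtain X where X: "\<forall>n. X n \<in> \<rat>" "X \<longlonglongrightarrow> y" by (auto simp: closure_sequential)
    then have "\<forall>n. \<exists>q. X n = of_rat q" by (auto simp: Rats_def)
    then obtain Y where "\<forall>n. X n = of_rat (Y n)" by metis
    then show ?thesis using X(2) by (intro exI[of _ Y]) (simp add: fun_eq_iff[symmetric])
  qed
  then obtain Y1 Y2 Y3 :: "nat \<Rightarrow> rat"
    where "(\<lambda>n. of_rat (Y1 n)) \<longlonglongrightarrow> - d1" "(\<lambda>n. of_rat (Y2 n)) \<longlonglongrightarrow> - d2" "(\<lambda>n. of_rat (Y3 n)) \<longlonglongrightarrow> - d3"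
    by meson
  text \<open>Test the half-space with normal \<open>- d\<close>.\<close>
  then have "(\<lambda>n. sqrt ((of_rat (Y1 n))\<^sup>2 + (of_rat (Y2 n))\<^sup>2 + (of_rat (Y3 n))\<^sup>2)
      + of_rat (Y1 n) * d1 + of_rat (Y2 n) * d2 + of_rat (Y3 n) * d3)
      \<longlonglongrightarrow> sqrt ((- d1)\<^sup>2 + (- d2)\<^sup>2 + (- d3)\<^sup>2) + - d1 * d1 + - d2 * d2 + - d3 * d3"
    by (intro tendsto_intros)
  then have "0 \<le> sqrt ((- d1)\<^sup>2 + (- d2)\<^sup>2 + (- d3)\<^sup>2) + - d1 * d1 + - d2 * d2 + - d3 * d3"
    using assms by (intro LIMSEQ_le_const) auto
  then have le_sqrt: "d1\<^sup>2 + d2\<^sup>2 + d3\<^sup>2 \<le> sqrt (d1\<^sup>2 + d2\<^sup>2 + d3\<^sup>2)"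
    by (simp add: power2_eq_square)
  show ?thesis
  proof (rule ccontr)
    define S where "S = d1\<^sup>2 + d2\<^sup>2 + d3\<^sup>2"
    assume "\<not> d1\<^sup>2 + d2\<^sup>2 + d3\<^sup>2 \<le> 1"
    then have "1 < sqrt S" by (simp add: S_def)
    then have "sqrt S * 1 < sqrt S * sqrt S" by (intro mult_strict_left_mono) auto
    then have "sqrt S < S" by (simp add: S_def)
    then show False using le_sqrt by (simp add: S_def)
  qed
qed

lemma positive_definite_fejer_combination:
  fixes N :: nat and t :: real
  assumes pd: "positive_definite \<phi>"
  defines "T c \<equiv> fejer_sum N (\<lambda>m. fst (\<phi> m)) (\<lambda>m. qim c (\<phi> m)) t"
  shows "lorentz_cone (T 0) (T 1 - T 0) (T 2 - T 0) (T 3 - T 0)"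
  using positive_definite_fejer_sum[OF pd, of N _ _ _ t]
  unfolding lorentz_cone_def fejer_sum_combination T_def by simp

lemma positive_definite_fejer_sum_nonneg:
  assumes pd: "positive_definite \<phi>"
  shows "0 \<le> fejer_sum N (\<lambda>m. fst (\<phi> m)) (\<lambda>m. qim c (\<phi> m)) t"
proof -
  define T where "T c = fejer_sum N (\<lambda>m. fst (\<phi> m)) (\<lambda>m. qim c (\<phi> m)) t" for c
  have T: "0 \<le> sqrt (w1\<^sup>2 + w2\<^sup>2 + w3\<^sup>2) * T 0 + w1 * (T 1 - T 0) + w2 * (T 2 - T 0) + w3 * (T 3 - T 0)"
    for w1 w2 w3
    using positive_definite_fejer_combination[OF pd, of N t] unfolding T_def lorentz_cone_def by blast
  have "0 \<le> T 1" "0 \<le> T 2" "0 \<le> T 3"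
    using T[of 1 0 0] T[of 0 1 0] T[of 0 0 1] by simp_all
  moreover have "0 \<le> T 0" using T[of "- 1" 0 0] \<open>0 \<le> T 1\<close> by simp
  moreover have "c \<notin> {1, 2, 3} \<Longrightarrow> T c = T 0" by (simp add: T_def qim_def)
  ultimately show ?thesis unfolding T_def[symmetric] by (cases "c \<in> {1, 2, 3}") auto
qed

section \<open>Trigonometric integrals\<close>

lemma has_integral_cos_int:
  "((\<lambda>t. cos (of_int k * t)) has_integral (if k = 0 then 2 * pi else 0)) {-pi..pi}"
proof (cases "k = 0")
  case True
  then show ?thesis using has_integral_const_real[of "1::real" "- pi" pi] by simp
next
  case False
  have "((\<lambda>t. cos (of_int k * t)) has_integral
      (sin (of_int k * pi) / of_int k - sin (of_int k * - pi) / of_int k)) {-pi..pi}"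
  proof (rule fundamental_theorem_of_calculus)
    fix x assume "x \<in> {-pi..pi}"
    have "((\<lambda>t. sin (of_int k * t) / of_int k) has_real_derivative cos (of_int k * x)) (at x within {-pi..pi})"
      using False by (auto intro!: derivative_eq_intros)
    then show "((\<lambda>t. sin (of_int k * t) / of_int k) has_vector_derivative cos (of_int k * x))
        (at x within {-pi..pi})"
      by (simp add: has_real_derivative_iff_has_vector_derivative)
  qed simp
  moreover have "sin (of_int k * pi) = 0" by (simp add: sin_times_pi_eq_0)
  ultimately show ?thesis using False by simp
qed

lemma has_integral_sin_int: "((\<lambda>t. sin (of_int k * t)) has_integral 0) {-pi..pi}"
proof (cases "k = 0")
  case False
  have "((\<lambda>t. sin (of_int k * t)) has_integral
      (- cos (of_int k * pi) / of_int k - - cos (of_int k * - pi) / of_int k)) {-pi..pi}"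
  proof (rule fundamental_theorem_of_calculus)
    fix x assume "x \<in> {-pi..pi}"
    have "((\<lambda>t. - cos (of_int k * t) / of_int k) has_real_derivative sin (of_int k * x))
        (at x within {-pi..pi})"
      using False by (auto intro!: derivative_eq_intros)
    then show "((\<lambda>t. - cos (of_int k * t) / of_int k) has_vector_derivative sin (of_int k * x))
        (at x within {-pi..pi})"
      by (simp add: has_real_derivative_iff_has_vector_derivative)
  qed simp
  then show ?thesis by simp
qed simp

lemma has_integral_cos_mult_cos:
  "((\<lambda>t. cos (of_int m * t) * cos (of_int n * t)) has_integral
    pi * (of_bool (m = n) + of_bool (m = - n))) {-pi..pi}"
proof -
  have e: "cos (of_int m * t) * cos (of_int n * t)
      = 1/2 * cos (of_int (m - n) * t) + 1/2 * cos (of_int (m + n) * t)" for t :: real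
    by (subst cos_times_cos) (simp add: algebra_simps add_divide_distrib diff_divide_distrib)
  have "((\<lambda>t. 1/2 * cos (of_int (m - n) * t) + 1/2 * cos (of_int (m + n) * t)) has_integral
      1/2 * (if m - n = 0 then 2 * pi else 0) + 1/2 * (if m + n = 0 then 2 * pi else 0)) {-pi..pi}"
    by (intro has_integral_add has_integral_mult_right has_integral_cos_int)
  then show ?thesis unfolding e by (auto simp: algebra_simps of_bool_def)
qed

lemma has_integral_sin_mult_cos:
  "((\<lambda>t. sin (of_int m * t) * cos (of_int n * t)) has_integral 0) {-pi..pi}"
proof -
  have e: "sin (of_int m * t) * cos (of_int n * t)
      = 1/2 * sin (of_int (m + n) * t) + 1/2 * sin (of_int (m - n) * t)" for t :: real
    by (subst sin_times_cos) (simp add: algebra_simps add_divide_distrib diff_divide_distrib)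
  have "((\<lambda>t. 1/2 * sin (of_int (m + n) * t) + 1/2 * sin (of_int (m - n) * t)) has_integral
      1/2 * 0 + 1/2 * 0) {-pi..pi}"
    by (intro has_integral_add has_integral_mult_right has_integral_sin_int)
  then show ?thesis unfolding e by simp
qed

lemma has_integral_sin_mult_sin:
  "((\<lambda>t. sin (of_int m * t) * sin (of_int n * t)) has_integral
    pi * (of_bool (m = n) - of_bool (m = - n))) {-pi..pi}"
proof -
  have e: "sin (of_int m * t) * sin (of_int n * t)
      = 1/2 * cos (of_int (m - n) * t) - 1/2 * cos (of_int (m + n) * t)" for t :: real
    by (subst sin_times_sin) (simp add: algebra_simps add_divide_distrib diff_divide_distrib)
  have "((\<lambda>t. 1/2 * cos (of_int (m - n) * t) - 1/2 * cos (of_int (m + n) * t)) has_integral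
      1/2 * (if m - n = 0 then 2 * pi else 0) - 1/2 * (if m + n = 0 then 2 * pi else 0)) {-pi..pi}"
    by (intro has_integral_diff has_integral_mult_right has_integral_cos_int)
  then show ?thesis unfolding e by (auto simp: algebra_simps of_bool_def)
qed

definition lag_count :: "nat \<Rightarrow> int \<Rightarrow> real" where
  "lag_count N n = (\<Sum>i<N. \<Sum>j<N. of_bool (int j - int i = n))"

lemma lag_count_uminus: "lag_count N (- n) = lag_count N n"
  unfolding lag_count_def by (subst sum.swap) (intro sum.cong refl, auto)

lemma lag_count_nonneg_lag:
  assumes "0 \<le> n"
  shows "lag_count N n = real (N - nat n)"
proof -
  have "(\<Sum>j<N. of_bool (int j - int i = n)) = (of_bool (i < N - nat n) :: real)" if "i < N" for i
  proof -
    have "{..<N} \<inter> {j. int j - int i = n} = (if i < N - nat n then {i + nat n} else {})"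
      using assms that by auto
    then show ?thesis by simp
  qed
  then have "lag_count N n = (\<Sum>i<N. of_bool (i < N - nat n))"
    unfolding lag_count_def by (intro sum.cong) auto
  also have "{..<N} \<inter> {i. i < N - nat n} = {..<N - nat n}" by auto
  then have "(\<Sum>i<N. of_bool (i < N - nat n) :: real) = real (N - nat n)" by simp
  finally show ?thesis .
qed

lemma lag_count_eq: "lag_count N n = real (N - nat \<bar>n\<bar>)"
  using lag_count_nonneg_lag[of n N] lag_count_nonneg_lag[of "- n" N] lag_count_uminus[of N n]
  by (cases "0 \<le> n") auto

lemma lag_count_ratio_tendsto: "(\<lambda>N. lag_count N n / real N) \<longlonglongrightarrow> 1"
proof -
  have "eventually (\<lambda>N. 1 - real (nat \<bar>n\<bar>) / real N = lag_count N n / real N) sequentially"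
    using eventually_ge_at_top[of "Suc (nat \<bar>n\<bar>)"]
    by eventually_elim (auto simp: lag_count_eq of_nat_diff field_simps)
  moreover have "(\<lambda>N. 1 - real (nat \<bar>n\<bar>) / real N) \<longlonglongrightarrow> 1"
    using tendsto_diff[OF tendsto_const lim_const_over_n[of "real (nat \<bar>n\<bar>)"]] by simp
  ultimately show ?thesis by (rule Lim_transform_eventually[rotated])
qed

lemma sum_lag_of_bool:
  "(\<Sum>i<N. \<Sum>j<N. f (int j - int i) * of_bool (int j - int i = n)) = lag_count N n * f n"
  unfolding lag_count_def sum_distrib_right by (intro sum.cong refl) auto

lemma has_integral_fejer_sum_mult_cos:
  "((\<lambda>t. fejer_sum N g h t * cos (of_int n * t)) has_integral
    pi * (lag_count N n * g n + lag_count N (- n) * g (- n))) {-pi..pi}"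
proof -
  have e: "fejer_sum N g h t * cos (of_int n * t) =
      (\<Sum>i<N. \<Sum>j<N. g (int j - int i) * (cos (of_int (int j - int i) * t) * cos (of_int n * t))
        + h (int j - int i) * (sin (of_int (int j - int i) * t) * cos (of_int n * t)))" for t
    unfolding fejer_sum_def sum_distrib_right by (simp add: algebra_simps)
  have "((\<lambda>t. \<Sum>i<N. \<Sum>j<N. g (int j - int i) * (cos (of_int (int j - int i) * t) * cos (of_int n * t))
        + h (int j - int i) * (sin (of_int (int j - int i) * t) * cos (of_int n * t))) has_integral
      (\<Sum>i<N. \<Sum>j<N. g (int j - int i) * (pi * (of_bool (int j - int i = n) + of_bool (int j - int i = - n)))
        + h (int j - int i) * 0)) {-pi..pi}"
    by (intro has_integral_sum finite_lessThan has_integral_add has_integral_mult_right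
        has_integral_cos_mult_cos has_integral_sin_mult_cos)
  also have "(\<Sum>i<N. \<Sum>j<N. g (int j - int i) * (pi * (of_bool (int j - int i = n) + of_bool (int j - int i = - n)))
        + h (int j - int i) * 0)
      = pi * ((\<Sum>i<N. \<Sum>j<N. g (int j - int i) * of_bool (int j - int i = n))
        + (\<Sum>i<N. \<Sum>j<N. g (int j - int i) * of_bool (int j - int i = - n)))"
    by (simp add: algebra_simps sum.distrib sum_distrib_left del: sum_mult_of_bool_eq)
  also have "\<dots> = pi * (lag_count N n * g n + lag_count N (- n) * g (- n))"
    by (simp only: sum_lag_of_bool)
  finally show ?thesis by (simp only: e)
qed

lemma has_integral_fejer_sum_mult_sin:
  "((\<lambda>t. fejer_sum N g h t * sin (of_int n * t)) has_integral
    pi * (lag_count N n * h n - lag_count N (- n) * h (- n))) {-pi..pi}"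
proof -
  have e: "fejer_sum N g h t * sin (of_int n * t) =
      (\<Sum>i<N. \<Sum>j<N. g (int j - int i) * (sin (of_int n * t) * cos (of_int (int j - int i) * t))
        + h (int j - int i) * (sin (of_int (int j - int i) * t) * sin (of_int n * t)))" for t
    unfolding fejer_sum_def sum_distrib_right by (simp add: algebra_simps)
  have "((\<lambda>t. \<Sum>i<N. \<Sum>j<N. g (int j - int i) * (sin (of_int n * t) * cos (of_int (int j - int i) * t))
        + h (int j - int i) * (sin (of_int (int j - int i) * t) * sin (of_int n * t))) has_integral
      (\<Sum>i<N. \<Sum>j<N. g (int j - int i) * 0
        + h (int j - int i) * (pi * (of_bool (int j - int i = n) - of_bool (int j - int i = - n))))) {-pi..pi}"
    by (intro has_integral_sum finite_lessThan has_integral_add has_integral_mult_right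
        has_integral_sin_mult_sin has_integral_sin_mult_cos)
  also have "(\<Sum>i<N. \<Sum>j<N. g (int j - int i) * 0
        + h (int j - int i) * (pi * (of_bool (int j - int i = n) - of_bool (int j - int i = - n))))
      = pi * ((\<Sum>i<N. \<Sum>j<N. h (int j - int i) * of_bool (int j - int i = n))
        - (\<Sum>i<N. \<Sum>j<N. h (int j - int i) * of_bool (int j - int i = - n)))"
    by (simp add: algebra_simps sum_subtractf sum_distrib_left del: sum_mult_of_bool_eq)
  also have "\<dots> = pi * (lag_count N n * h n - lag_count N (- n) * h (- n))"
    by (simp only: sum_lag_of_bool)
  finally show ?thesis by (simp only: e)
qed

section \<open>Fejer measures\<close>

definition fejer_density :: "nat \<Rightarrow> (int \<Rightarrow> real) \<Rightarrow> (int \<Rightarrow> real) \<Rightarrow> real \<Rightarrow> real" where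
  "fejer_density N g h t = indicator {-pi..pi} t * fejer_sum N g h t / (2 * pi * real N * g 0)"

definition fejer_measure :: "nat \<Rightarrow> (int \<Rightarrow> real) \<Rightarrow> (int \<Rightarrow> real) \<Rightarrow> real measure" where
  "fejer_measure N g h = density lborel (\<lambda>t. ennreal (fejer_density N g h t))"

lemma borel_measurable_fejer_density [measurable]: "fejer_density N g h \<in> borel_measurable borel"
proof -
  have [measurable]: "fejer_sum N g h \<in> borel_measurable borel"
    by (intro borel_measurable_continuous_onI continuous_on_fejer_sum)
  show ?thesis unfolding fejer_density_def by measurable
qed

lemma sets_fejer_measure [simp]: "sets (fejer_measure N g h) = sets borel"
  by (simp add: fejer_measure_def)

context
  fixes N :: nat and g h :: "int \<Rightarrow> real"
  assumes fejer_nonneg: "\<And>t. 0 \<le> fejer_sum N g h t" and g0: "0 < g 0" and N: "0 < N"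
begin

lemma fejer_density_nonneg: "0 \<le> fejer_density N g h t"
  using fejer_nonneg g0 N by (simp add: fejer_density_def indicator_def)

lemma integral_fejer_measure:
  assumes f: "continuous_on UNIV f"
  shows "integral\<^sup>L (fejer_measure N g h) f
    = integral {-pi..pi} (\<lambda>t. fejer_sum N g h t * f t) / (2 * pi * real N * g 0)"
proof -
  have [measurable]: "f \<in> borel_measurable borel"
    using f by (rule borel_measurable_continuous_onI)
  have "integral\<^sup>L (fejer_measure N g h) f = integral\<^sup>L lborel (\<lambda>t. fejer_density N g h t * f t)"
    unfolding fejer_measure_def by (subst integral_density) (auto simp: fejer_density_nonneg)
  also have "\<dots> = (LINT t:{-pi..pi}|lborel. fejer_sum N g h t * f t) / (2 * pi * real N * g 0)"
    by (simp add: fejer_density_def set_lebesgue_integral_def indicator_def algebra_simps)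
  also have "(LINT t:{-pi..pi}|lborel. fejer_sum N g h t * f t) = integral {-pi..pi} (\<lambda>t. fejer_sum N g h t * f t)"
    by (intro set_borel_integral_eq_integral borel_integrable_atLeastAtMost' continuous_intros
        continuous_on_fejer_sum continuous_on_subset[OF f]) auto
  finally show ?thesis .
qed

lemma integral_fejer_measure_cos:
  assumes "\<And>m. g (- m) = g m"
  shows "integral\<^sup>L (fejer_measure N g h) (\<lambda>t. cos (of_int n * t)) = lag_count N n / real N * (g n / g 0)"
  using integral_unique[OF has_integral_fejer_sum_mult_cos] N g0
  by (subst integral_fejer_measure) (auto intro!: continuous_intros simp: assms lag_count_uminus)

lemma integral_fejer_measure_sin:
  assumes "\<And>m. h (- m) = - h m"
  shows "integral\<^sup>L (fejer_measure N g h) (\<lambda>t. sin (of_int n * t)) = lag_count N n / real N * (h n / g 0)"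
  using integral_unique[OF has_integral_fejer_sum_mult_sin] N g0
  by (subst integral_fejer_measure) (auto intro!: continuous_intros simp: assms lag_count_uminus)

lemma real_distribution_fejer_measure:
  assumes "\<And>m. g (- m) = g m"
  shows "real_distribution (fejer_measure N g h)"
proof -
  let ?d = "fejer_density N g h"
  have "integral\<^sup>L lborel ?d = integral\<^sup>L (fejer_measure N g h) (\<lambda>t. cos (of_int 0 * t))"
    unfolding fejer_measure_def by (subst integral_density) (auto simp: fejer_density_nonneg)
  also have "\<dots> = 1"
    using integral_fejer_measure_cos[OF assms, of 0] N g0 by (simp add: lag_count_eq)
  finally have "integral\<^sup>L lborel ?d = 1" .
  moreover have "integrable lborel ?d"
  proof -
    have "set_integrable lborel {-pi..pi} (\<lambda>t. fejer_sum N g h t / (2 * pi * real N * g 0))"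
      by (intro borel_integrable_atLeastAtMost' continuous_intros continuous_on_fejer_sum) (use N g0 in auto)
    then show ?thesis by (simp add: set_integrable_def fejer_density_def[abs_def])
  qed
  ultimately have "emeasure (fejer_measure N g h) UNIV = 1"
    unfolding fejer_measure_def
    by (subst emeasure_density) (auto simp: fejer_density_nonneg nn_integral_eq_integral)
  then have "prob_space (fejer_measure N g h)"
    by (intro prob_spaceI) (simp add: fejer_measure_def)
  then show ?thesis by (simp add: real_distribution_def real_distribution_axioms_def)
qed

lemma emeasure_fejer_measure_outside: "emeasure (fejer_measure N g h) (- {-pi..pi}) = 0"
proof -
  have "ennreal (fejer_density N g h t) * indicator (- {-pi..pi}) t = 0" for t
    by (simp add: fejer_density_def indicator_def)
  then show ?thesis unfolding fejer_measure_def
    by (subst emeasure_density) (simp_all del: mult_eq_0_iff)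
qed

end

lemma tight_fejer_measure:
  assumes "\<And>N t. 0 \<le> fejer_sum (Suc N) g h t" and "0 < g 0" and "\<And>m. g (- m) = g m"
  shows "tight (\<lambda>N. fejer_measure (Suc N) g h)"
proof -
  have distr: "real_distribution (fejer_measure (Suc N) g h)" for N
    using assms by (intro real_distribution_fejer_measure) auto
  have "measure (fejer_measure (Suc N) g h) {-4<..4} = 1" for N
  proof -
    interpret real_distribution "fejer_measure (Suc N) g h" by (rule distr)
    have "measure (fejer_measure (Suc N) g h) (- {-pi..pi}) = 0"
      using emeasure_fejer_measure_outside[of "Suc N" g h] assms by (simp add: measure_def)
    then have "measure (fejer_measure (Suc N) g h) {-pi..pi} = 1"
      using prob_compl[of "- {-pi..pi}"] by simp
    moreover have "{-pi..pi} \<subseteq> {-4<..4::real}" using pi_less_4 by auto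
    ultimately show ?thesis
      using finite_measure_mono[of "{-pi..pi}" "{-4<..4}"] prob_le_1[of "{-4<..4}"] by simp
  qed
  then show ?thesis
    unfolding tight_def using distr by (intro conjI allI impI exI[of _ "-4"] exI[of _ 4]) auto
qed

section \<open>Weak limits and Radon-Nikodym densities\<close>

lemma weak_conv_m_subseq:
  assumes "weak_conv_m \<mu> M" and "strict_mono r"
  shows "weak_conv_m (\<mu> \<circ> r) M"
  using assms LIMSEQ_subseq_LIMSEQ[OF _ assms(2)]
  unfolding weak_conv_m_def weak_conv_def by (auto simp: comp_def)

lemma helly_selection_simultaneous:
  fixes \<mu> :: "nat \<Rightarrow> nat \<Rightarrow> real measure"
  assumes "\<And>c. c < m \<Longrightarrow> tight (\<mu> c)"
  shows "\<exists>r \<Lambda>. strict_mono r \<and> (\<forall>c<m. real_distribution (\<Lambda> c) \<and> weak_conv_m (\<mu> c \<circ> r) (\<Lambda> c))"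
  using assms
proof (induction m)
  case 0
  show ?case by (rule exI[of _ id]) (auto simp: strict_mono_def)
next
  case (Suc m)
  from Suc.IH[OF Suc.prems[OF less_SucI]]
  obtain r \<Lambda> where r: "strict_mono r" "\<forall>c<m. real_distribution (\<Lambda> c) \<and> weak_conv_m (\<mu> c \<circ> r) (\<Lambda> c)"
    by blast
  obtain r' M where r': "strict_mono r'" "real_distribution M" "weak_conv_m (\<mu> m \<circ> r \<circ> r') M"
    using tight_imp_convergent_subsubsequence[OF Suc.prems[of m] r(1)] by auto
  show ?case
  proof (intro exI[of _ "r \<circ> r'"] exI[of _ "\<Lambda>(m := M)"] conjI allI impI)
    show "strict_mono (r \<circ> r')" using r(1) r'(1) by (rule strict_mono_o)
    fix c assume "c < Suc m"
    then show "real_distribution ((\<Lambda>(m := M)) c)" using r(2) r'(2) by (cases "c = m") auto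
    show "weak_conv_m (\<mu> c \<circ> (r \<circ> r')) ((\<Lambda>(m := M)) c)"
      using r'(3) weak_conv_m_subseq[OF _ r'(1), of "\<mu> c \<circ> r" "\<Lambda> c"] r(2) \<open>c < Suc m\<close>
      by (cases "c = m") (auto simp: comp_assoc)
  qed
qed

lemma measure_closed_le_of_integral_le:
  fixes M1 M2 :: "'a::metric_space measure"
  assumes sets: "sets M1 = sets borel" "sets M2 = sets borel"
    and "finite_measure M1" "finite_measure M2"
    and le: "\<And>f. continuous_on UNIV f \<Longrightarrow> (\<And>x. 0 \<le> f x \<and> f x \<le> 1)
      \<Longrightarrow> integral\<^sup>L M1 f \<le> c * integral\<^sup>L M2 f"
    and F: "closed F"
  shows "measure M1 F \<le> c * measure M2 F"
proof (cases "F = {}")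
  case False
  text \<open>Continuous functions decreasing to the indicator of \<open>F\<close>.\<close>
  define s where "s n x = max 0 (1 - real (Suc n) * infdist x F)" for n x
  have cont: "continuous_on UNIV (s n)" for n unfolding s_def by (intro continuous_intros)
  have s_bounds: "0 \<le> s n x \<and> s n x \<le> 1" for n x using infdist_nonneg[of x F] by (simp add: s_def)
  have lim: "(\<lambda>n. s n x) \<longlonglongrightarrow> indicator F x" for x
  proof (cases "x \<in> F")
    case True
    then have "infdist x F = 0" using in_closed_iff_infdist_zero[OF F False] by simp
    then show ?thesis using True by (simp add: s_def)
  next
    case xF: False
    have d: "infdist x F > 0" by (rule infdist_pos_not_in_closed[OF F False xF])
    obtain N where N: "1 / infdist x F < real N" using reals_Archimedean2 by blast
    have "eventually (\<lambda>n. s n x = 0) sequentially"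
      unfolding eventually_sequentially
    proof (intro exI[of _ N] allI impI)
      fix n assume "N \<le> n"
      then have "1 / infdist x F < real (Suc n)" using N by linarith
      then have "1 < real (Suc n) * infdist x F" using d by (simp add: field_simps)
      then show "s n x = 0" by (simp add: s_def)
    qed
    then show ?thesis using xF by (simp add: tendsto_eventually)
  qed
  have meas: "s n \<in> borel_measurable borel" for n by (rule borel_measurable_continuous_onI[OF cont])
  have bnd: "norm (s n x) \<le> 1" for n x using s_bounds[of n x] by simp
  have FB: "F \<in> sets borel" using F by (simp add: borel_closed)
  have conv: "(\<lambda>n. integral\<^sup>L M (s n)) \<longlonglongrightarrow> integral\<^sup>L M (indicator F :: 'a \<Rightarrow> real)"
    if M: "sets M = sets borel" "finite_measure M" for M
  proof (rule integral_dominated_convergence[where w = "\<lambda>_. 1"])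
    interpret finite_measure M by (rule M(2))
    show "indicator F \<in> borel_measurable M" "s n \<in> borel_measurable M" for n
      using FB meas by (simp_all add: measurable_cong_sets[OF M(1) refl])
    show "integrable M (\<lambda>_. 1 :: real)" by simp
  qed (use lim bnd in simp_all)
  note l1 = conv[OF sets(1) \<open>finite_measure M1\<close>] and l2 = conv[OF sets(2) \<open>finite_measure M2\<close>]
  have "integral\<^sup>L M1 (s n) \<le> c * integral\<^sup>L M2 (s n)" for n
    using le[OF cont s_bounds] .
  then have "integral\<^sup>L M1 (indicator F :: 'a \<Rightarrow> real) \<le> c * integral\<^sup>L M2 (indicator F :: 'a \<Rightarrow> real)"
    by (intro LIMSEQ_le[OF l1 tendsto_mult_left[OF l2]]) auto
  then show ?thesis using FB sets by simp
qed simp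

text \<open>By inner regularity the comparison passes from closed sets to all Borel sets.\<close>
lemma emeasure_le_of_integral_le:
  fixes M1 M2 :: "'a::{second_countable_topology, complete_space} measure"
  assumes sets: "sets M1 = sets borel" "sets M2 = sets borel"
    and fin: "finite_measure M1" "finite_measure M2" and c: "0 \<le> c"
    and le: "\<And>f. continuous_on UNIV f \<Longrightarrow> (\<And>x. 0 \<le> f x \<and> f x \<le> 1)
      \<Longrightarrow> integral\<^sup>L M1 f \<le> c * integral\<^sup>L M2 f"
    and B: "B \<in> sets borel"
  shows "emeasure M1 B \<le> ennreal c * emeasure M2 B"
proof -
  interpret M1: finite_measure M1 by fact
  interpret M2: finite_measure M2 by fact
  have "emeasure M1 B = (SUP K \<in> {K. K \<subseteq> B \<and> compact K}. emeasure M1 K)"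
    by (rule inner_regular[OF sets(1) _ B]) simp
  also have "\<dots> \<le> ennreal c * emeasure M2 B"
  proof (rule SUP_least)
    fix K assume K: "K \<in> {K. K \<subseteq> B \<and> compact K}"
    then have "closed K" by (simp add: compact_imp_closed)
    then have KB: "K \<in> sets borel" by (simp add: borel_closed)
    have "emeasure M1 K = ennreal (measure M1 K)" by (simp add: M1.emeasure_eq_measure)
    also have "\<dots> \<le> ennreal (c * measure M2 K)"
      by (intro ennreal_leI measure_closed_le_of_integral_le[OF sets fin le \<open>closed K\<close>])
    also have "\<dots> = ennreal c * emeasure M2 K"
      using c by (simp add: M2.emeasure_eq_measure ennreal_mult)
    also have "\<dots> \<le> ennreal c * emeasure M2 B"
      using K KB B by (intro mult_left_mono emeasure_mono) (auto simp: sets(2))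
    finally show "emeasure M1 K \<le> ennreal c * emeasure M2 B" .
  qed
  finally show ?thesis .
qed

lemma finite_measure_density_integrable:
  assumes "integrable M f" and "\<And>x. 0 \<le> f x"
  shows "finite_measure (density M (\<lambda>x. ennreal (f x)))"
proof (rule finite_measureI)
  have [measurable]: "f \<in> borel_measurable M" using assms(1) by auto
  have "emeasure (density M (\<lambda>x. ennreal (f x))) (space (density M (\<lambda>x. ennreal (f x))))
      = (\<integral>\<^sup>+x. ennreal (f x) \<partial>M)"
    by (subst emeasure_density) (auto intro!: nn_integral_cong)
  also have "\<dots> = ennreal (integral\<^sup>L M f)"
    using assms by (intro nn_integral_eq_integral) auto
  finally show "emeasure (density M (\<lambda>x. ennreal (f x))) (space (density M (\<lambda>x. ennreal (f x)))) \<noteq> \<infinity>"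
    by simp
qed

text \<open>Compare the measures with densities \<open>h\<^sup>+\<close> and \<open>h\<^sup>-\<close> by the previous lemma.\<close>
lemma AE_nonneg_of_integral_nonneg:
  fixes L :: "'a::{second_countable_topology, complete_space} measure" and h :: "'a \<Rightarrow> real"
  assumes sets: "sets L = sets borel" and "finite_measure L" and h: "integrable L h"
    and nonneg: "\<And>f. continuous_on UNIV f \<Longrightarrow> (\<And>x. 0 \<le> f x \<and> f x \<le> 1)
      \<Longrightarrow> 0 \<le> integral\<^sup>L L (\<lambda>x. f x * h x)"
  shows "AE x in L. 0 \<le> h x"
proof -
  interpret finite_measure L by fact
  note meas_cong = measurable_cong_sets[OF sets refl]
  have [measurable]: "h \<in> borel_measurable borel" "h \<in> borel_measurable L" using h meas_cong by auto
  define M1 where "M1 = density L (\<lambda>x. ennreal (max 0 (- h x)))"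
  define M2 where "M2 = density L (\<lambda>x. ennreal (max 0 (h x)))"
  have int_parts: "integrable L (\<lambda>x. max 0 (h x))" "integrable L (\<lambda>x. max 0 (- h x))"
    using h by (auto intro!: integrable_max)
  have le: "integral\<^sup>L M1 f \<le> 1 * integral\<^sup>L M2 f"
    if f: "continuous_on UNIV f" "\<And>x. 0 \<le> f x \<and> f x \<le> 1" for f :: "'a \<Rightarrow> real"
  proof -
    have [measurable]: "f \<in> borel_measurable L"
      using f(1) by (simp add: meas_cong borel_measurable_continuous_onI)
    have int_f: "integrable L (\<lambda>x. g x * f x)" if "integrable L g" for g :: "'a \<Rightarrow> real"
      by (rule Bochner_Integration.integrable_bound[where f = g])
         (use that f(2) in \<open>auto simp: abs_mult intro!: AE_I2 mult_left_le\<close>)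
    have "integral\<^sup>L M2 f - integral\<^sup>L M1 f
        = integral\<^sup>L L (\<lambda>x. max 0 (h x) * f x) - integral\<^sup>L L (\<lambda>x. max 0 (- h x) * f x)"
      unfolding M1_def M2_def by (subst (1 2) integral_density) auto
    also have "\<dots> = integral\<^sup>L L (\<lambda>x. max 0 (h x) * f x - max 0 (- h x) * f x)"
      by (rule Bochner_Integration.integral_diff[symmetric]) (auto intro!: int_f int_parts)
    also have "\<dots> = integral\<^sup>L L (\<lambda>x. f x * h x)"
      by (rule Bochner_Integration.integral_cong) (auto simp: max_def algebra_simps)
    finally show ?thesis using nonneg[OF f] by simp
  qed
  define B where "B = {x. h x < 0}"
  have B: "B \<in> sets borel" unfolding B_def by measurable
  have "sets M1 = sets borel" "sets M2 = sets borel" using sets by (simp_all add: M1_def M2_def)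
  moreover have "finite_measure M1"
    unfolding M1_def by (rule finite_measure_density_integrable[OF int_parts(2)]) simp
  moreover have "finite_measure M2"
    unfolding M2_def by (rule finite_measure_density_integrable[OF int_parts(1)]) simp
  ultimately have "emeasure M1 B \<le> ennreal 1 * emeasure M2 B"
    by (intro emeasure_le_of_integral_le[OF _ _ _ _ _ le B]) auto
  moreover have "emeasure M2 B = 0"
    unfolding M2_def using B sets
    by (subst emeasure_density) (auto simp: B_def indicator_def ennreal_neg intro!: nn_integral_zero' AE_I2)
  ultimately have "emeasure M1 B = 0" by simp
  then have "(\<integral>\<^sup>+x. ennreal (max 0 (- h x)) * indicator B x \<partial>L) = 0"
    unfolding M1_def using B sets by (subst (asm) emeasure_density) auto
  then have "AE x in L. ennreal (max 0 (- h x)) * indicator B x = 0"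
    using B sets by (subst (asm) nn_integral_0_iff_AE) auto
  then show ?thesis
    by eventually_elim (auto simp: B_def indicator_def max_def split: if_splits)
qed

lemma integral_density_exists:
  assumes "finite_measure L0" "finite_measure L1" "sets L1 = sets L0" "absolutely_continuous L0 L1"
  obtains D where "D \<in> borel_measurable L0" "\<And>x. 0 \<le> D x" "integrable L0 D"
    "\<And>f :: _ \<Rightarrow> real. f \<in> borel_measurable L0 \<Longrightarrow> integral\<^sup>L L1 f = integral\<^sup>L L0 (\<lambda>x. D x * f x)"
proof -
  interpret L0: finite_measure L0 by fact
  interpret L1: finite_measure L1 by fact
  obtain D where D[measurable]: "D \<in> borel_measurable L0"
    and RN: "AE x in L0. RN_deriv L0 L1 x = ennreal (D x)" and D_nonneg: "\<And>x. 0 \<le> D x"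
    using L0.real_RN_deriv[OF L1.finite_measure_axioms assms(4,3)] by metis
  have density: "density L0 (\<lambda>x. ennreal (D x)) = L1"
  proof -
    have "density L0 (\<lambda>x. ennreal (D x)) = density L0 (RN_deriv L0 L1)"
      by (rule density_cong) (use RN in \<open>auto intro: AE_symmetric\<close>)
    also have "\<dots> = L1" by (rule L0.density_RN_deriv[OF assms(4,3)])
    finally show ?thesis .
  qed
  have "integrable L0 D"
  proof (rule integrableI_nonneg)
    show "AE x in L0. 0 \<le> D x" using D_nonneg by simp
    have "(\<lambda>x. ennreal (D x)) \<in> borel_measurable L0" by measurable
    then have "(\<integral>\<^sup>+x. ennreal (D x) \<partial>L0) = emeasure (density L0 (\<lambda>x. ennreal (D x))) (space L0)"
      by (subst emeasure_density) (auto intro!: nn_integral_cong)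
    also have "\<dots> = emeasure L1 (space L1)"
      using density sets_eq_imp_space_eq[OF assms(3)] by simp
    finally show "(\<integral>\<^sup>+x. ennreal (D x) \<partial>L0) < \<infinity>"
      using L1.emeasure_finite[of "space L1"] by (simp add: less_top[symmetric])
  qed fact
  moreover have "integral\<^sup>L L1 f = integral\<^sup>L L0 (\<lambda>x. D x * f x)" if "f \<in> borel_measurable L0" for f :: "_ \<Rightarrow> real"
    unfolding density[symmetric] using that D_nonneg by (subst integral_density) auto
  ultimately show ?thesis using that[OF D D_nonneg] by blast
qed

section \<open>Measures carried by circles\<close>

lemma qpow_circle:
  assumes "u1\<^sup>2 + u2\<^sup>2 + u3\<^sup>2 = (1::real)"
  shows "qpow (cos t, u1 * sin t, u2 * sin t, u3 * sin t) k
    = (cos (real k * t), u1 * sin (real k * t), u2 * sin (real k * t), u3 * sin (real k * t))"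
proof (induction k)
  case 0
  then show ?case by (simp add: qone_def)
next
  case (Suc k)
  have "qmult (cos (real k * t), u1 * sin (real k * t), u2 * sin (real k * t), u3 * sin (real k * t))
      (cos t, u1 * sin t, u2 * sin t, u3 * sin t)
    = (cos (real k * t) * cos t - (u1\<^sup>2 + u2\<^sup>2 + u3\<^sup>2) * (sin (real k * t) * sin t),
       u1 * (cos (real k * t) * sin t + sin (real k * t) * cos t),
       u2 * (cos (real k * t) * sin t + sin (real k * t) * cos t),
       u3 * (cos (real k * t) * sin t + sin (real k * t) * cos t))"
    by (simp add: algebra_simps power2_eq_square)
  also have "\<dots> = (cos (real (Suc k) * t), u1 * sin (real (Suc k) * t), u2 * sin (real (Suc k) * t),
      u3 * sin (real (Suc k) * t))"
    unfolding assms by (simp add: distrib_right cos_add sin_add algebra_simps)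
  finally show ?case using Suc by simp
qed

lemma norm_circle:
  assumes "u1\<^sup>2 + u2\<^sup>2 + u3\<^sup>2 = (1::real)"
  shows "norm ((cos t, u1 * sin t, u2 * sin t, u3 * sin t) :: quat) = 1"
proof -
  have "(cos t)\<^sup>2 + (u1 * sin t)\<^sup>2 + (u2 * sin t)\<^sup>2 + (u3 * sin t)\<^sup>2
      = (cos t)\<^sup>2 + (u1\<^sup>2 + u2\<^sup>2 + u3\<^sup>2) * (sin t)\<^sup>2"
    by (simp add: algebra_simps power_mult_distrib)
  then show ?thesis using assms by (simp add: norm_quat)
qed

lemma qpowi_circle:
  assumes u: "u1\<^sup>2 + u2\<^sup>2 + u3\<^sup>2 = (1::real)"
  shows "qpowi (cos t, u1 * sin t, u2 * sin t, u3 * sin t) n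
    = (cos (of_int n * t), u1 * sin (of_int n * t), u2 * sin (of_int n * t), u3 * sin (of_int n * t))"
proof (cases "0 \<le> n")
  case True
  then show ?thesis using qpow_circle[OF u, of t "nat n"] by (simp add: qpowi_def)
next
  case False
  have "qinv (cos t, u1 * sin t, u2 * sin t, u3 * sin t) = (cos (- t), u1 * sin (- t), u2 * sin (- t), u3 * sin (- t))"
    using norm_circle[OF u, of t] by (simp add: qinv_unit)
  moreover have "real (nat (- n)) * (- t) = of_int n * t" using False by simp
  ultimately show ?thesis using False qpow_circle[OF u, of "- t" "nat (- n)"] by (simp add: qpowi_def)
qed

lemma
  fixes P :: "'a measure" and F :: "'a \<Rightarrow> quat" and w :: "'a \<Rightarrow> real"
  assumes "finite_measure P" and [measurable]: "F \<in> borel_measurable P" "w \<in> borel_measurable P"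
    and F_unit: "\<And>x. norm (F x) = 1" and w_nonneg: "\<And>x. 0 \<le> w x" and w_le: "\<And>x. w x \<le> C"
  defines "\<mu> \<equiv> distr (density P (\<lambda>x. ennreal (w x))) borel F"
  shows sphere_measure_distr_density: "sphere_measure \<mu>"
    and integral_qpowi_distr_density:
      "integral\<^sup>L \<mu> (\<lambda>s. qpowi s n) = integral\<^sup>L P (\<lambda>x. w x *\<^sub>R qpowi (F x) n)"
proof -
  interpret finite_measure P by fact
  have "emeasure \<mu> (- qsphere) = 0"
  proof -
    have "F -` (- qsphere) \<inter> space P = {}" unfolding qsphere_def using F_unit by blast
    then show ?thesis
      unfolding \<mu>_def by (subst emeasure_distr) (auto intro!: borel_open closed_qsphere)
  qed
  moreover have "finite_measure \<mu>"
  proof (rule finite_measureI)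
    have "emeasure \<mu> (space \<mu>) = (\<integral>\<^sup>+x. ennreal (w x) \<partial>P)"
      unfolding \<mu>_def by (subst emeasure_distr) (auto simp: emeasure_density intro!: nn_integral_cong)
    also have "\<dots> \<le> (\<integral>\<^sup>+x. ennreal C \<partial>P)"
      using w_le by (intro nn_integral_mono) (simp add: ennreal_leI)
    also have "\<dots> < \<infinity>" by (simp add: emeasure_eq_measure ennreal_mult_less_top)
    finally show "emeasure \<mu> (space \<mu>) \<noteq> \<infinity>" by simp
  qed
  ultimately show "sphere_measure \<mu>" by (simp add: sphere_measure_def \<mu>_def)
  have "integral\<^sup>L \<mu> (\<lambda>s. qpowi s n) = integral\<^sup>L (density P (\<lambda>x. ennreal (w x))) (\<lambda>x. qpowi (F x) n)"
    unfolding \<mu>_def by (rule integral_distr) auto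
  also have "\<dots> = integral\<^sup>L P (\<lambda>x. w x *\<^sub>R qpowi (F x) n)"
    by (rule integral_density) (auto simp: w_nonneg)
  finally show "integral\<^sup>L \<mu> (\<lambda>s. qpowi s n) = integral\<^sup>L P (\<lambda>x. w x *\<^sub>R qpowi (F x) n)" .
qed

lemma unit_direction:
  fixes w1 w2 w3 :: real
  defines "r \<equiv> sqrt (w1\<^sup>2 + w2\<^sup>2 + w3\<^sup>2)"
  defines "u1 \<equiv> if r = 0 then 1 else w1 / r" and "u2 \<equiv> if r = 0 then 0 else w2 / r"
    and "u3 \<equiv> if r = 0 then 0 else w3 / r"
  shows "u1\<^sup>2 + u2\<^sup>2 + u3\<^sup>2 = 1" and "r * u1 = w1" "r * u2 = w2" "r * u3 = w3"
proof -
  have zero: "r = 0 \<Longrightarrow> w1 = 0 \<and> w2 = 0 \<and> w3 = 0"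
    by (simp add: r_def add_nonneg_eq_0_iff)
  show "r * u1 = w1" "r * u2 = w2" "r * u3 = w3"
    using zero by (auto simp: u1_def u2_def u3_def)
  show "u1\<^sup>2 + u2\<^sup>2 + u3\<^sup>2 = 1"
  proof (cases "r = 0")
    case False
    then have "r\<^sup>2 = w1\<^sup>2 + w2\<^sup>2 + w3\<^sup>2" "w1\<^sup>2 + w2\<^sup>2 + w3\<^sup>2 \<noteq> 0" by (simp_all add: r_def)
    with False show ?thesis by (simp add: u1_def u2_def u3_def power_divide add_divide_distrib[symmetric])
  qed (simp add: u1_def u2_def u3_def)
qed

lemma integral_pair_count_space_bool:
  fixes g :: "'a \<times> bool \<Rightarrow> 'b::{banach, second_countable_topology}"
  assumes "sigma_finite_measure L" and "integrable (L \<Otimes>\<^sub>M count_space UNIV) g"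
  shows "integral\<^sup>L (L \<Otimes>\<^sub>M count_space UNIV) g = integral\<^sup>L L (\<lambda>t. g (t, True) + g (t, False))"
proof -
  interpret pair_sigma_finite L "count_space (UNIV :: bool set)"
    by (intro pair_sigma_finite.intro assms(1) sigma_finite_measure_count_space_finite) simp
  show ?thesis
    using integral_fst'[OF assms(2)] by (simp add: lebesgue_integral_count_space_finite UNIV_bool add.commute)
qed

lemma integral_circle_moments:
  fixes L :: "real measure" and W1 W2 W3 :: "real \<Rightarrow> real"
  assumes "finite_measure L" "sets L = sets borel"
    and [measurable]: "W1 \<in> borel_measurable borel" "W2 \<in> borel_measurable borel" "W3 \<in> borel_measurable borel"
    and W: "\<And>t. (W1 t)\<^sup>2 + (W2 t)\<^sup>2 + (W3 t)\<^sup>2 \<le> 1"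
  shows "integral\<^sup>L L (\<lambda>t. (cos (of_int n * t), W1 t * sin (of_int n * t), W2 t * sin (of_int n * t),
      W3 t * sin (of_int n * t)))
    = (integral\<^sup>L L (\<lambda>t. cos (of_int n * t)), integral\<^sup>L L (\<lambda>t. W1 t * sin (of_int n * t)),
       integral\<^sup>L L (\<lambda>t. W2 t * sin (of_int n * t)), integral\<^sup>L L (\<lambda>t. W3 t * sin (of_int n * t)))"
proof -
  interpret finite_measure L by fact
  have "norm ((cos (of_int n * t), W1 t * sin (of_int n * t), W2 t * sin (of_int n * t),
      W3 t * sin (of_int n * t)) :: quat) \<le> 1" for t
  proof -
    have "(W1 t)\<^sup>2 * (sin (of_int n * t))\<^sup>2 + (W2 t)\<^sup>2 * (sin (of_int n * t))\<^sup>2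
        + (W3 t)\<^sup>2 * (sin (of_int n * t))\<^sup>2 \<le> (sin (of_int n * t))\<^sup>2"
      using mult_right_mono[OF W[of t], of "(sin (of_int n * t))\<^sup>2"] by (simp add: algebra_simps)
    then have "(cos (of_int n * t))\<^sup>2 + (W1 t)\<^sup>2 * (sin (of_int n * t))\<^sup>2
        + (W2 t)\<^sup>2 * (sin (of_int n * t))\<^sup>2 + (W3 t)\<^sup>2 * (sin (of_int n * t))\<^sup>2 \<le> 1"
      using sin_cos_squared_add[of "of_int n * t"] by linarith
    then show ?thesis by (simp add: norm_quat power_mult_distrib)
  qed
  then have "integrable L (\<lambda>t. (cos (of_int n * t), W1 t * sin (of_int n * t), W2 t * sin (of_int n * t),
      W3 t * sin (of_int n * t)))"
    by (intro integrable_const_bound[where B = 1]) (auto simp: measurable_cong_sets[OF assms(2) refl])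
  then show ?thesis by (subst integral_quat_components) auto
qed

text \<open>A vector \<open>w\<close> of the unit ball is the barycentre of \<open>\<plusminus>w/|w|\<close> with weights \<open>(1 \<plusminus> |w|)/2\<close>;
  hence mixing the circles \<open>t \<mapsto> cos t \<plusminus> (w/|w|) sin t\<close> produces the moments \<open>(cos nt, w sin nt)\<close>.\<close>
lemma sphere_measure_mixing_circles:
  fixes L :: "real measure" and W1 W2 W3 :: "real \<Rightarrow> real"
  assumes L: "real_distribution L" and a0: "0 \<le> a0"
    and [measurable]: "W1 \<in> borel_measurable borel" "W2 \<in> borel_measurable borel" "W3 \<in> borel_measurable borel"
    and W: "\<And>t. (W1 t)\<^sup>2 + (W2 t)\<^sup>2 + (W3 t)\<^sup>2 \<le> 1"
  obtains \<mu> where "sphere_measure \<mu>"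
    "\<And>n. integral\<^sup>L \<mu> (\<lambda>s. qpowi s n) = (a0 * integral\<^sup>L L (\<lambda>t. cos (of_int n * t)),
       a0 * integral\<^sup>L L (\<lambda>t. W1 t * sin (of_int n * t)), a0 * integral\<^sup>L L (\<lambda>t. W2 t * sin (of_int n * t)),
       a0 * integral\<^sup>L L (\<lambda>t. W3 t * sin (of_int n * t)))"
proof -
  interpret L: real_distribution L by fact
  define r where "r t = sqrt ((W1 t)\<^sup>2 + (W2 t)\<^sup>2 + (W3 t)\<^sup>2)" for t
  define U1 where "U1 t = (if r t = 0 then 1 else W1 t / r t)" for t
  define U2 where "U2 t = (if r t = 0 then 0 else W2 t / r t)" for t
  define U3 where "U3 t = (if r t = 0 then 0 else W3 t / r t)" for t
  have U: "(U1 t)\<^sup>2 + (U2 t)\<^sup>2 + (U3 t)\<^sup>2 = 1" "r t * U1 t = W1 t" "r t * U2 t = W2 t" "r t * U3 t = W3 t"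
    for t unfolding r_def U1_def U2_def U3_def by (fact unit_direction)+
  define sg :: "bool \<Rightarrow> real" where "sg b = (if b then 1 else - 1)" for b
  define F :: "real \<times> bool \<Rightarrow> quat" where
    "F x = (cos (fst x), sg (snd x) * U1 (fst x) * sin (fst x), sg (snd x) * U2 (fst x) * sin (fst x),
      sg (snd x) * U3 (fst x) * sin (fst x))" for x
  define w :: "real \<times> bool \<Rightarrow> real" where "w x = a0 * (1 + sg (snd x) * r (fst x)) / 2" for x
  define P where "P = L \<Otimes>\<^sub>M count_space (UNIV :: bool set)"
  have sgU: "(sg b * U1 t)\<^sup>2 + (sg b * U2 t)\<^sup>2 + (sg b * U3 t)\<^sup>2 = 1" for b t
    using U(1)[of t] by (simp add: sg_def power_mult_distrib)
  have F_unit: "norm (F x) = 1" for x unfolding F_def by (rule norm_circle[OF sgU])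
  have r: "0 \<le> r t" "r t \<le> 1" for t using W[of t] by (auto simp: r_def)
  have w_bounds: "0 \<le> w x" "w x \<le> a0" for x
    using r[of "fst x"] a0 by (auto simp: w_def sg_def intro!: mult_left_mono)
  have sets_P: "sets P = sets (borel \<Otimes>\<^sub>M count_space UNIV)"
    unfolding P_def by (rule sets_pair_measure_cong) auto
  have [measurable]: "F \<in> borel_measurable P" "w \<in> borel_measurable P"
    unfolding measurable_cong_sets[OF sets_P refl] F_def w_def sg_def U1_def U2_def U3_def r_def
    by measurable
  have P: "finite_measure P"
    unfolding P_def
    by (intro finite_measure_pair_measure L.finite_measure_axioms finite_measure_count_space) simp
  define \<mu> where "\<mu> = distr (density P (\<lambda>x. ennreal (w x))) borel F"
  show ?thesis
  proof (rule that)
    show "sphere_measure \<mu>"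
      unfolding \<mu>_def by (rule sphere_measure_distr_density) (use P F_unit w_bounds in auto)
    fix n :: int
    have mixing: "w (t, True) *\<^sub>R qpowi (F (t, True)) n + w (t, False) *\<^sub>R qpowi (F (t, False)) n
        = a0 *\<^sub>R (cos (of_int n * t), W1 t * sin (of_int n * t), W2 t * sin (of_int n * t),
            W3 t * sin (of_int n * t))" for t
    proof -
      have "w (t, True) *\<^sub>R qpowi (F (t, True)) n + w (t, False) *\<^sub>R qpowi (F (t, False)) n
          = a0 *\<^sub>R (cos (of_int n * t), r t * U1 t * sin (of_int n * t),
              r t * U2 t * sin (of_int n * t), r t * U3 t * sin (of_int n * t))"
        unfolding F_def fst_conv snd_conv qpowi_circle[OF sgU]
        by (simp add: w_def sg_def algebra_simps add_divide_distrib diff_divide_distrib)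
      then show ?thesis by (simp add: U(2-4))
    qed
    have int: "integrable P (\<lambda>x. w x *\<^sub>R qpowi (F x) n)"
      using w_bounds by (intro finite_measure.integrable_const_bound[OF P, where B = a0])
        (auto simp: norm_qpowi_unit[OF F_unit])
    have "integral\<^sup>L \<mu> (\<lambda>s. qpowi s n) = integral\<^sup>L P (\<lambda>x. w x *\<^sub>R qpowi (F x) n)"
      unfolding \<mu>_def by (rule integral_qpowi_distr_density) (use P F_unit w_bounds in auto)
    also have "\<dots> = integral\<^sup>L L (\<lambda>t. w (t, True) *\<^sub>R qpowi (F (t, True)) n + w (t, False) *\<^sub>R qpowi (F (t, False)) n)"
      using int unfolding P_def by (rule integral_pair_count_space_bool[OF L.sigma_finite_measure_axioms])
    also have "\<dots> = a0 *\<^sub>R integral\<^sup>L L (\<lambda>t. (cos (of_int n * t), W1 t * sin (of_int n * t),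
        W2 t * sin (of_int n * t), W3 t * sin (of_int n * t)))"
      by (simp only: mixing integral_scaleR_right)
    also have "\<dots> = (a0 * integral\<^sup>L L (\<lambda>t. cos (of_int n * t)),
       a0 * integral\<^sup>L L (\<lambda>t. W1 t * sin (of_int n * t)), a0 * integral\<^sup>L L (\<lambda>t. W2 t * sin (of_int n * t)),
       a0 * integral\<^sup>L L (\<lambda>t. W3 t * sin (of_int n * t)))"
      by (subst integral_circle_moments[OF L.finite_measure_axioms _ _ _ _ W]) simp_all
    finally show "integral\<^sup>L \<mu> (\<lambda>s. qpowi s n) = (a0 * integral\<^sup>L L (\<lambda>t. cos (of_int n * t)),
       a0 * integral\<^sup>L L (\<lambda>t. W1 t * sin (of_int n * t)), a0 * integral\<^sup>L L (\<lambda>t. W2 t * sin (of_int n * t)),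
       a0 * integral\<^sup>L L (\<lambda>t. W3 t * sin (of_int n * t)))" .
  qed
qed

lemma positive_definite_fejer_measure_lorentz_cone:
  assumes pd: "positive_definite \<phi>" and a0: "0 < fst (\<phi> 0)" and N: "0 < N"
    and f: "continuous_on UNIV f" "\<And>x. 0 \<le> f x"
  defines "J c \<equiv> integral\<^sup>L (fejer_measure N (\<lambda>m. fst (\<phi> m)) (\<lambda>m. qim c (\<phi> m))) f"
  shows "lorentz_cone (J 0) (J 1 - J 0) (J 2 - J 0) (J 3 - J 0)"
  unfolding lorentz_cone_def
proof (intro allI)
  fix w1 w2 w3 :: real
  define \<rho> where "\<rho> = sqrt (w1\<^sup>2 + w2\<^sup>2 + w3\<^sup>2)"
  define T where "T c t = fejer_sum N (\<lambda>m. fst (\<phi> m)) (\<lambda>m. qim c (\<phi> m)) t" for c t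
  define C where "C = 2 * pi * real N * fst (\<phi> 0)"
  define G where "G c = integral {-pi..pi} (\<lambda>t. T c t * f t)" for c
  have "0 < C" using a0 N by (simp add: C_def)
  have J: "J c = G c / C" for c
    unfolding J_def G_def C_def T_def
    by (rule integral_fejer_measure[OF positive_definite_fejer_sum_nonneg[OF pd] a0 N f(1)])
  have "((\<lambda>t. T c t * f t) has_integral G c) {-pi..pi}" for c
    unfolding G_def T_def
    by (intro integrable_integral integrable_continuous_interval continuous_intros continuous_on_fejer_sum
        continuous_on_subset[OF f(1)]) auto
  then have "((\<lambda>t. \<rho> * (T 0 t * f t) + w1 * (T 1 t * f t - T 0 t * f t) + w2 * (T 2 t * f t - T 0 t * f t)
      + w3 * (T 3 t * f t - T 0 t * f t)) has_integral
      \<rho> * G 0 + w1 * (G 1 - G 0) + w2 * (G 2 - G 0) + w3 * (G 3 - G 0)) {-pi..pi}"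
    by (intro has_integral_add has_integral_diff has_integral_mult_right)
  then have "0 \<le> \<rho> * G 0 + w1 * (G 1 - G 0) + w2 * (G 2 - G 0) + w3 * (G 3 - G 0)"
  proof (rule has_integral_nonneg)
    fix t
    have "0 \<le> (\<rho> * T 0 t + w1 * (T 1 t - T 0 t) + w2 * (T 2 t - T 0 t) + w3 * (T 3 t - T 0 t)) * f t"
      using positive_definite_fejer_combination[OF pd, of N t] f(2)[of t]
      unfolding lorentz_cone_def \<rho>_def T_def by simp
    then show "0 \<le> \<rho> * (T 0 t * f t) + w1 * (T 1 t * f t - T 0 t * f t) + w2 * (T 2 t * f t - T 0 t * f t)
        + w3 * (T 3 t * f t - T 0 t * f t)"
      by (simp add: algebra_simps)
  qed
  moreover have "\<rho> * J 0 + w1 * (J 1 - J 0) + w2 * (J 2 - J 0) + w3 * (J 3 - J 0)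
      = (\<rho> * G 0 + w1 * (G 1 - G 0) + w2 * (G 2 - G 0) + w3 * (G 3 - G 0)) / C"
    unfolding J using \<open>0 < C\<close> by (simp add: field_simps)
  ultimately show "0 \<le> sqrt (w1\<^sup>2 + w2\<^sup>2 + w3\<^sup>2) * J 0 + w1 * (J 1 - J 0) + w2 * (J 2 - J 0) + w3 * (J 3 - J 0)"
    using \<open>0 < C\<close> by (simp add: \<rho>_def)
qed

lemma
  assumes pd: "positive_definite \<phi>" and a0: "0 < fst (\<phi> 0)"
  shows positive_definite_fejer_measure_distribution:
      "0 < N \<Longrightarrow> real_distribution (fejer_measure N (\<lambda>m. fst (\<phi> m)) (\<lambda>m. qim c (\<phi> m)))"
    and positive_definite_fejer_measure_tight:
      "tight (\<lambda>N. fejer_measure (Suc N) (\<lambda>m. fst (\<phi> m)) (\<lambda>m. qim c (\<phi> m)))"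
    and positive_definite_fejer_measure_cos:
      "0 < N \<Longrightarrow> integral\<^sup>L (fejer_measure N (\<lambda>m. fst (\<phi> m)) (\<lambda>m. qim c (\<phi> m))) (\<lambda>t. cos (of_int n * t))
        = lag_count N n / real N * (fst (\<phi> n) / fst (\<phi> 0))"
    and positive_definite_fejer_measure_sin:
      "0 < N \<Longrightarrow> integral\<^sup>L (fejer_measure N (\<lambda>m. fst (\<phi> m)) (\<lambda>m. qim c (\<phi> m))) (\<lambda>t. sin (of_int n * t))
        = lag_count N n / real N * (qim c (\<phi> n) / fst (\<phi> 0))"
proof -
  note nonneg = positive_definite_fejer_sum_nonneg[OF pd]
  have even: "fst (\<phi> (- m)) = fst (\<phi> m)" for m
    using positive_definite_uminus[OF pd, of m] by (simp add: qconj_eq_components)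
  have odd: "qim c (\<phi> (- m)) = - qim c (\<phi> m)" for m
    using positive_definite_uminus[OF pd, of m] by (simp add: qim_qconj)
  show "0 < N \<Longrightarrow> real_distribution (fejer_measure N (\<lambda>m. fst (\<phi> m)) (\<lambda>m. qim c (\<phi> m)))"
    by (rule real_distribution_fejer_measure) (use nonneg a0 even in auto)
  show "tight (\<lambda>N. fejer_measure (Suc N) (\<lambda>m. fst (\<phi> m)) (\<lambda>m. qim c (\<phi> m)))"
    by (rule tight_fejer_measure) (use nonneg a0 even in auto)
  show "0 < N \<Longrightarrow> integral\<^sup>L (fejer_measure N (\<lambda>m. fst (\<phi> m)) (\<lambda>m. qim c (\<phi> m))) (\<lambda>t. cos (of_int n * t))
      = lag_count N n / real N * (fst (\<phi> n) / fst (\<phi> 0))"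
    by (rule integral_fejer_measure_cos) (use nonneg a0 even in auto)
  show "0 < N \<Longrightarrow> integral\<^sup>L (fejer_measure N (\<lambda>m. fst (\<phi> m)) (\<lambda>m. qim c (\<phi> m))) (\<lambda>t. sin (of_int n * t))
      = lag_count N n / real N * (qim c (\<phi> n) / fst (\<phi> 0))"
    by (rule integral_fejer_measure_sin) (use nonneg a0 odd in auto)
qed

text \<open>Herglotz's argument, run for the four scalar sequences at once: Helly's theorem extracts
  weak limits of the normalised Fejer measures along a common subsequence.\<close>
lemma positive_definite_limit_measures:
  assumes pd: "positive_definite \<phi>" and a0: "0 < fst (\<phi> 0)"
  obtains \<Lambda> :: "nat \<Rightarrow> real measure" where
    "\<And>c. c < 4 \<Longrightarrow> real_distribution (\<Lambda> c)"
    "\<And>c n. c < 4 \<Longrightarrow> integral\<^sup>L (\<Lambda> c) (\<lambda>t. cos (of_int n * t)) = fst (\<phi> n) / fst (\<phi> 0)"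
    "\<And>c n. c < 4 \<Longrightarrow> integral\<^sup>L (\<Lambda> c) (\<lambda>t. sin (of_int n * t)) = qim c (\<phi> n) / fst (\<phi> 0)"
    "\<And>f. continuous_on UNIV f \<Longrightarrow> (\<And>x. 0 \<le> f x \<and> f x \<le> 1) \<Longrightarrow>
      lorentz_cone (integral\<^sup>L (\<Lambda> 0) f) (integral\<^sup>L (\<Lambda> 1) f - integral\<^sup>L (\<Lambda> 0) f)
        (integral\<^sup>L (\<Lambda> 2) f - integral\<^sup>L (\<Lambda> 0) f) (integral\<^sup>L (\<Lambda> 3) f - integral\<^sup>L (\<Lambda> 0) f)"
proof -
  define \<nu> where "\<nu> c N = fejer_measure (Suc N) (\<lambda>m. fst (\<phi> m)) (\<lambda>m. qim c (\<phi> m))" for c N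
  obtain r \<Lambda> where r: "strict_mono r"
    and \<Lambda>: "\<And>c. c < 4 \<Longrightarrow> real_distribution (\<Lambda> c) \<and> weak_conv_m (\<nu> c \<circ> r) (\<Lambda> c)"
    using helly_selection_simultaneous[of 4 \<nu>] positive_definite_fejer_measure_tight[OF pd a0]
    unfolding \<nu>_def by blast
  have distr: "real_distribution (\<nu> c N)" for c N
    unfolding \<nu>_def by (rule positive_definite_fejer_measure_distribution[OF pd a0]) simp
  have conv: "(\<lambda>k. integral\<^sup>L (\<nu> c (r k)) f) \<longlonglongrightarrow> integral\<^sup>L (\<Lambda> c) f"
    if "c < 4" "continuous_on UNIV f" "\<And>x. \<bar>f x\<bar> \<le> 1" for c and f :: "real \<Rightarrow> real"
    using weak_conv_imp_integral_bdd_continuous_conv[of "\<nu> c \<circ> r" "\<Lambda> c" f 1] \<Lambda>[OF that(1)] distr that(2,3)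
    by (simp add: continuous_on_eq_continuous_at comp_def)
  have ratio: "(\<lambda>k. lag_count (Suc (r k)) n / real (Suc (r k)) * x) \<longlonglongrightarrow> x" for n :: int and x :: real
  proof -
    have "(\<lambda>k. lag_count (Suc (r k)) n / real (Suc (r k))) \<longlonglongrightarrow> 1"
      using LIMSEQ_subseq_LIMSEQ[OF lag_count_ratio_tendsto, of "\<lambda>k. Suc (r k)"] r
      by (simp add: strict_mono_Suc_iff strict_mono_less comp_def)
    from tendsto_mult_right[OF this, of x] show ?thesis by simp
  qed
  show ?thesis
  proof (rule that)
    show "real_distribution (\<Lambda> c)" if "c < 4" for c using \<Lambda>[OF that] by blast
  next
    fix c :: nat and n :: int assume c: "c < 4"
    have "(\<lambda>k. integral\<^sup>L (\<nu> c (r k)) (\<lambda>t. cos (of_int n * t)))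
        = (\<lambda>k. lag_count (Suc (r k)) n / real (Suc (r k)) * (fst (\<phi> n) / fst (\<phi> 0)))"
      unfolding \<nu>_def by (intro ext positive_definite_fejer_measure_cos[OF pd a0]) simp
    with ratio have "(\<lambda>k. integral\<^sup>L (\<nu> c (r k)) (\<lambda>t. cos (of_int n * t))) \<longlonglongrightarrow> fst (\<phi> n) / fst (\<phi> 0)"
      by (simp only:)
    moreover have "(\<lambda>k. integral\<^sup>L (\<nu> c (r k)) (\<lambda>t. cos (of_int n * t))) \<longlonglongrightarrow> integral\<^sup>L (\<Lambda> c) (\<lambda>t. cos (of_int n * t))"
      using c by (intro conv) (auto intro!: continuous_intros)
    ultimately show "integral\<^sup>L (\<Lambda> c) (\<lambda>t. cos (of_int n * t)) = fst (\<phi> n) / fst (\<phi> 0)"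
      by (rule LIMSEQ_unique[symmetric])
  next
    fix c :: nat and n :: int assume c: "c < 4"
    have "(\<lambda>k. integral\<^sup>L (\<nu> c (r k)) (\<lambda>t. sin (of_int n * t)))
        = (\<lambda>k. lag_count (Suc (r k)) n / real (Suc (r k)) * (qim c (\<phi> n) / fst (\<phi> 0)))"
      unfolding \<nu>_def by (intro ext positive_definite_fejer_measure_sin[OF pd a0]) simp
    with ratio have "(\<lambda>k. integral\<^sup>L (\<nu> c (r k)) (\<lambda>t. sin (of_int n * t))) \<longlonglongrightarrow> qim c (\<phi> n) / fst (\<phi> 0)"
      by (simp only:)
    moreover have "(\<lambda>k. integral\<^sup>L (\<nu> c (r k)) (\<lambda>t. sin (of_int n * t))) \<longlonglongrightarrow> integral\<^sup>L (\<Lambda> c) (\<lambda>t. sin (of_int n * t))"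
      using c by (intro conv) (auto intro!: continuous_intros)
    ultimately show "integral\<^sup>L (\<Lambda> c) (\<lambda>t. sin (of_int n * t)) = qim c (\<phi> n) / fst (\<phi> 0)"
      by (rule LIMSEQ_unique[symmetric])
  next
    fix f :: "real \<Rightarrow> real"
    assume f: "continuous_on UNIV f" "\<And>x. 0 \<le> f x \<and> f x \<le> 1"
    define J where "J k c = integral\<^sup>L (\<nu> c (r k)) f" for k c
    have lim: "(\<lambda>k. J k c) \<longlonglongrightarrow> integral\<^sup>L (\<Lambda> c) f" if "c < 4" for c
      unfolding J_def using that f by (intro conv) (auto simp: abs_le_iff intro: order_trans)
    have cone: "lorentz_cone (J k 0) (J k 1 - J k 0) (J k 2 - J k 0) (J k 3 - J k 0)" for k
      unfolding J_def \<nu>_def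
      by (rule positive_definite_fejer_measure_lorentz_cone[OF pd a0]) (use f in auto)
    show "lorentz_cone (integral\<^sup>L (\<Lambda> 0) f) (integral\<^sup>L (\<Lambda> 1) f - integral\<^sup>L (\<Lambda> 0) f)
        (integral\<^sup>L (\<Lambda> 2) f - integral\<^sup>L (\<Lambda> 0) f) (integral\<^sup>L (\<Lambda> 3) f - integral\<^sup>L (\<Lambda> 0) f)"
      by (rule lorentz_cone_tendsto[of "\<lambda>k. J k 0" "\<lambda>k. J k 1 - J k 0" "\<lambda>k. J k 2 - J k 0"
            "\<lambda>k. J k 3 - J k 0"])
         (use cone in simp, (intro tendsto_diff lim; simp)+)
  qed
qed

text \<open>Countably many rational half-spaces suffice to cut out the unit ball.\<close>
lemma AE_unit_ball_of_lorentz_cone: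
  fixes L :: "'a::{second_countable_topology, complete_space} measure" and w1 w2 w3 :: "'a \<Rightarrow> real"
  assumes sets: "sets L = sets borel" and fin: "finite_measure L"
    and int: "integrable L w1" "integrable L w2" "integrable L w3"
    and cone: "\<And>f. continuous_on UNIV f \<Longrightarrow> (\<And>x. 0 \<le> f x \<and> f x \<le> 1) \<Longrightarrow>
      lorentz_cone (integral\<^sup>L L f) (integral\<^sup>L L (\<lambda>x. f x * w1 x)) (integral\<^sup>L L (\<lambda>x. f x * w2 x))
        (integral\<^sup>L L (\<lambda>x. f x * w3 x))"
  shows "AE x in L. (w1 x)\<^sup>2 + (w2 x)\<^sup>2 + (w3 x)\<^sup>2 \<le> 1"
proof -
  interpret finite_measure L by fact
  have "AE x in L. 0 \<le> sqrt ((of_rat q1)\<^sup>2 + (of_rat q2)\<^sup>2 + (of_rat q3)\<^sup>2)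
      + of_rat q1 * w1 x + of_rat q2 * w2 x + of_rat q3 * w3 x" for q1 q2 q3 :: rat
  proof (rule AE_nonneg_of_integral_nonneg[OF sets fin])
    show "integrable L (\<lambda>x. sqrt ((of_rat q1)\<^sup>2 + (of_rat q2)\<^sup>2 + (of_rat q3)\<^sup>2)
        + of_rat q1 * w1 x + of_rat q2 * w2 x + of_rat q3 * w3 x)"
      using int by auto
  next
    fix f :: "'a \<Rightarrow> real" assume f: "continuous_on UNIV f" "\<And>x. 0 \<le> f x \<and> f x \<le> 1"
    have [measurable]: "f \<in> borel_measurable L"
      using f(1) by (simp add: measurable_cong_sets[OF sets refl] borel_measurable_continuous_onI)
    have int_f: "integrable L (\<lambda>x. f x * g x)" if "integrable L g" for g
      by (rule Bochner_Integration.integrable_bound[where f = g])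
         (use that f(2) in \<open>auto simp: abs_mult intro!: AE_I2 mult_left_le_one_le\<close>)
    have "integrable L f"
      using f(2) by (intro integrable_const_bound[where B = 1]) auto
    then show "0 \<le> integral\<^sup>L L (\<lambda>x. f x * (sqrt ((of_rat q1)\<^sup>2 + (of_rat q2)\<^sup>2 + (of_rat q3)\<^sup>2)
        + of_rat q1 * w1 x + of_rat q2 * w2 x + of_rat q3 * w3 x))"
      using cone[OF f] int_f[OF int(1)] int_f[OF int(2)] int_f[OF int(3)]
      unfolding lorentz_cone_def by (simp add: algebra_simps)
  qed
  then have "AE x in L. \<forall>q :: rat \<times> rat \<times> rat. 0 \<le> sqrt ((of_rat (fst q))\<^sup>2
      + (of_rat (fst (snd q)))\<^sup>2 + (of_rat (snd (snd q)))\<^sup>2)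
      + of_rat (fst q) * w1 x + of_rat (fst (snd q)) * w2 x + of_rat (snd (snd q)) * w3 x"
    unfolding AE_all_countable by blast
  then show ?thesis
    by eventually_elim (rule unit_ball_of_rat_halfspaces, auto dest: spec[of _ "(_, _, _)"])
qed

lemma lorentz_cone_measures_absolutely_continuous:
  fixes \<Lambda> :: "nat \<Rightarrow> 'a::{second_countable_topology, complete_space} measure"
  assumes sets: "\<And>c. c < 4 \<Longrightarrow> sets (\<Lambda> c) = sets borel"
    and fin: "\<And>c. c < 4 \<Longrightarrow> finite_measure (\<Lambda> c)"
    and cone: "\<And>f. continuous_on UNIV f \<Longrightarrow> (\<And>x. 0 \<le> f x \<and> f x \<le> 1) \<Longrightarrow>
      lorentz_cone (integral\<^sup>L (\<Lambda> 0) f) (integral\<^sup>L (\<Lambda> 1) f - integral\<^sup>L (\<Lambda> 0) f)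
        (integral\<^sup>L (\<Lambda> 2) f - integral\<^sup>L (\<Lambda> 0) f) (integral\<^sup>L (\<Lambda> 3) f - integral\<^sup>L (\<Lambda> 0) f)"
    and c: "c \<in> {1, 2, 3}"
  shows "absolutely_continuous (\<Lambda> 0) (\<Lambda> c)"
proof -
  have sets_c: "sets (\<Lambda> c) = sets borel" "sets (\<Lambda> 0) = sets borel"
    and fin_c: "finite_measure (\<Lambda> c)" "finite_measure (\<Lambda> 0)"
    using sets fin c by auto
  text \<open>The half-space with normal \<open>- e\<^sub>c\<close> gives \<open>\<Lambda>\<^sub>c \<le> 2 \<Lambda>\<^sub>0\<close>.\<close>
  have int_le: "integral\<^sup>L (\<Lambda> c) f \<le> 2 * integral\<^sup>L (\<Lambda> 0) f"
    if "continuous_on UNIV f" "\<And>x. 0 \<le> f x \<and> f x \<le> 1" for f :: "'a \<Rightarrow> real"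
  proof -
    define I where "I c = integral\<^sup>L (\<Lambda> c) f" for c
    have "0 \<le> sqrt (w1\<^sup>2 + w2\<^sup>2 + w3\<^sup>2) * I 0 + w1 * (I 1 - I 0) + w2 * (I 2 - I 0) + w3 * (I 3 - I 0)"
      for w1 w2 w3
      using cone[OF that] unfolding lorentz_cone_def I_def by blast
    from this[of "- 1" 0 0] this[of 0 "- 1" 0] this[of 0 0 "- 1"] show ?thesis
      using c by (auto simp: I_def)
  qed
  have le: "emeasure (\<Lambda> c) B \<le> ennreal 2 * emeasure (\<Lambda> 0) B" if "B \<in> sets borel" for B
    by (rule emeasure_le_of_integral_le[OF sets_c fin_c _ int_le that]) simp
  show ?thesis
    unfolding absolutely_continuous_def
  proof
    fix B assume "B \<in> null_sets (\<Lambda> 0)"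
    then have "B \<in> sets borel" "emeasure (\<Lambda> 0) B = 0" using sets_c by (auto simp: null_sets_def)
    then show "B \<in> null_sets (\<Lambda> c)" using le[of B] sets_c by (auto simp: null_sets_def)
  qed
qed

lemma lorentz_cone_measures_signed_density:
  fixes \<Lambda> :: "nat \<Rightarrow> 'a::{second_countable_topology, complete_space} measure"
  assumes sets: "\<And>c. c < 4 \<Longrightarrow> sets (\<Lambda> c) = sets borel"
    and fin: "\<And>c. c < 4 \<Longrightarrow> finite_measure (\<Lambda> c)"
    and cone: "\<And>f. continuous_on UNIV f \<Longrightarrow> (\<And>x. 0 \<le> f x \<and> f x \<le> 1) \<Longrightarrow>
      lorentz_cone (integral\<^sup>L (\<Lambda> 0) f) (integral\<^sup>L (\<Lambda> 1) f - integral\<^sup>L (\<Lambda> 0) f)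
        (integral\<^sup>L (\<Lambda> 2) f - integral\<^sup>L (\<Lambda> 0) f) (integral\<^sup>L (\<Lambda> 3) f - integral\<^sup>L (\<Lambda> 0) f)"
    and c: "c \<in> {1, 2, 3}"
  obtains w :: "'a \<Rightarrow> real" where "w \<in> borel_measurable borel" "integrable (\<Lambda> 0) w"
    "\<And>f. f \<in> borel_measurable borel \<Longrightarrow> (\<And>x. \<bar>f x\<bar> \<le> 1) \<Longrightarrow>
      integral\<^sup>L (\<Lambda> 0) (\<lambda>x. w x * f x) = integral\<^sup>L (\<Lambda> c) f - integral\<^sup>L (\<Lambda> 0) f"
proof -
  have sets_c: "sets (\<Lambda> c) = sets (\<Lambda> 0)" "sets (\<Lambda> 0) = sets borel"
    and fin_c: "finite_measure (\<Lambda> c)" "finite_measure (\<Lambda> 0)"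
    using sets fin c by auto
  interpret \<Lambda>0: finite_measure "\<Lambda> 0" by (rule fin_c(2))
  note meas_cong = measurable_cong_sets[OF sets_c(2) refl]
  obtain D where D[measurable]: "D \<in> borel_measurable (\<Lambda> 0)" and D_nonneg: "\<And>x. 0 \<le> D x"
    and D_int: "integrable (\<Lambda> 0) D"
    and density: "\<And>f :: 'a \<Rightarrow> real. f \<in> borel_measurable (\<Lambda> 0) \<Longrightarrow>
      integral\<^sup>L (\<Lambda> c) f = integral\<^sup>L (\<Lambda> 0) (\<lambda>x. D x * f x)"
    using integral_density_exists[OF fin_c(2,1) sets_c(1)
        lorentz_cone_measures_absolutely_continuous[OF sets fin cone c]] by blast
  show ?thesis
  proof (rule that[of "\<lambda>x. D x - 1"])
    have [measurable]: "D \<in> borel_measurable borel" using D by (simp add: meas_cong)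
    show "(\<lambda>x. D x - 1) \<in> borel_measurable borel" by measurable
    show "integrable (\<Lambda> 0) (\<lambda>x. D x - 1)" using D_int by simp
    fix f :: "'a \<Rightarrow> real" assume f: "f \<in> borel_measurable borel" "\<And>x. \<bar>f x\<bar> \<le> 1"
    then have [measurable]: "f \<in> borel_measurable (\<Lambda> 0)" by (simp add: meas_cong)
    have "integrable (\<Lambda> 0) (\<lambda>x. D x * f x)"
      by (rule Bochner_Integration.integrable_bound[where f = D])
         (use D_int D_nonneg f(2) in \<open>auto simp: abs_mult intro!: AE_I2 mult_left_le\<close>)
    moreover have "integrable (\<Lambda> 0) f"
      using f(2) by (intro \<Lambda>0.integrable_const_bound[where B = 1]) auto
    ultimately show "integral\<^sup>L (\<Lambda> 0) (\<lambda>x. (D x - 1) * f x) = integral\<^sup>L (\<Lambda> c) f - integral\<^sup>L (\<Lambda> 0) f"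
      using density by (simp add: left_diff_distrib)
  qed
qed

text \<open>\<open>W\<^sub>c\<close> is \<open>d\<Lambda>\<^sub>c/d\<Lambda>\<^sub>0 - 1\<close>, redefined on a null set.\<close>
lemma lorentz_cone_measures_direction_field:
  fixes \<Lambda> :: "nat \<Rightarrow> 'a::{second_countable_topology, complete_space} measure"
  assumes sets: "\<And>c. c < 4 \<Longrightarrow> sets (\<Lambda> c) = sets borel"
    and fin: "\<And>c. c < 4 \<Longrightarrow> finite_measure (\<Lambda> c)"
    and cone: "\<And>f. continuous_on UNIV f \<Longrightarrow> (\<And>x. 0 \<le> f x \<and> f x \<le> 1) \<Longrightarrow>
      lorentz_cone (integral\<^sup>L (\<Lambda> 0) f) (integral\<^sup>L (\<Lambda> 1) f - integral\<^sup>L (\<Lambda> 0) f)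
        (integral\<^sup>L (\<Lambda> 2) f - integral\<^sup>L (\<Lambda> 0) f) (integral\<^sup>L (\<Lambda> 3) f - integral\<^sup>L (\<Lambda> 0) f)"
  obtains W :: "nat \<Rightarrow> 'a \<Rightarrow> real" where "\<And>c. c \<in> {1, 2, 3} \<Longrightarrow> W c \<in> borel_measurable borel"
    "\<And>x. (W 1 x)\<^sup>2 + (W 2 x)\<^sup>2 + (W 3 x)\<^sup>2 \<le> 1"
    "\<And>c f. c \<in> {1, 2, 3} \<Longrightarrow> f \<in> borel_measurable borel \<Longrightarrow> (\<And>x. \<bar>f x\<bar> \<le> 1) \<Longrightarrow>
      integral\<^sup>L (\<Lambda> 0) (\<lambda>x. W c x * f x) = integral\<^sup>L (\<Lambda> c) f - integral\<^sup>L (\<Lambda> 0) f"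
proof -
  interpret \<Lambda>0: finite_measure "\<Lambda> 0" using fin by simp
  have sets0: "sets (\<Lambda> 0) = sets borel" using sets by simp
  note meas_cong = measurable_cong_sets[OF sets0 refl]
  define P where "P c w \<longleftrightarrow> w \<in> borel_measurable borel \<and> integrable (\<Lambda> 0) w \<and>
      (\<forall>f. f \<in> borel_measurable borel \<longrightarrow> (\<forall>x. \<bar>f x\<bar> \<le> 1) \<longrightarrow>
        integral\<^sup>L (\<Lambda> 0) (\<lambda>x. w x * f x) = integral\<^sup>L (\<Lambda> c) f - integral\<^sup>L (\<Lambda> 0) f)"
    for c and w :: "'a \<Rightarrow> real"
  have "\<exists>w. P c w" if "c \<in> {1, 2, 3}" for c
    using lorentz_cone_measures_signed_density[OF sets fin cone that] unfolding P_def by blast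
  then obtain w where w: "\<And>c. c \<in> {1, 2, 3} \<Longrightarrow> P c (w c)"
    using bchoice[of "{1, 2, 3}" P] by blast
  have w_integral: "integral\<^sup>L (\<Lambda> 0) (\<lambda>x. w c x * f x) = integral\<^sup>L (\<Lambda> c) f - integral\<^sup>L (\<Lambda> 0) f"
    if "c \<in> {1, 2, 3}" "f \<in> borel_measurable borel" "\<And>x. \<bar>f x\<bar> \<le> 1" for c f
    using w[OF that(1)] that(2,3) by (simp add: P_def)
  have w_int: "integrable (\<Lambda> 0) (w c)" if "c \<in> {1, 2, 3}" for c
    using w[OF that] by (simp add: P_def)
  have ball: "AE x in \<Lambda> 0. (w 1 x)\<^sup>2 + (w 2 x)\<^sup>2 + (w 3 x)\<^sup>2 \<le> 1"
  proof (rule AE_unit_ball_of_lorentz_cone[OF sets0 \<Lambda>0.finite_measure_axioms])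
    show "integrable (\<Lambda> 0) (w 1)" "integrable (\<Lambda> 0) (w 2)" "integrable (\<Lambda> 0) (w 3)"
      using w_int by auto
    fix f :: "'a \<Rightarrow> real" assume f: "continuous_on UNIV f" "\<And>x. 0 \<le> f x \<and> f x \<le> 1"
    then have "f \<in> borel_measurable borel" and "\<And>x. \<bar>f x\<bar> \<le> 1"
      by (auto intro: borel_measurable_continuous_onI)
    then show "lorentz_cone (integral\<^sup>L (\<Lambda> 0) f) (integral\<^sup>L (\<Lambda> 0) (\<lambda>x. f x * w 1 x))
        (integral\<^sup>L (\<Lambda> 0) (\<lambda>x. f x * w 2 x)) (integral\<^sup>L (\<Lambda> 0) (\<lambda>x. f x * w 3 x))"
      using cone[OF f] w_integral by (simp add: mult.commute)
  qed
  define W where "W c x = (if (w 1 x)\<^sup>2 + (w 2 x)\<^sup>2 + (w 3 x)\<^sup>2 \<le> 1 then w c x else 0)" for c x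
  have w_meas: "w 1 \<in> borel_measurable borel" "w 2 \<in> borel_measurable borel" "w 3 \<in> borel_measurable borel"
    using w by (simp_all add: P_def)
  have W_meas: "W 1 \<in> borel_measurable borel" "W 2 \<in> borel_measurable borel" "W 3 \<in> borel_measurable borel"
    unfolding W_def using w_meas by measurable
  show ?thesis
  proof (rule that)
    show "W c \<in> borel_measurable borel" if "c \<in> {1, 2, 3}" for c
      using that W_meas by auto
    show "(W 1 x)\<^sup>2 + (W 2 x)\<^sup>2 + (W 3 x)\<^sup>2 \<le> 1" for x by (simp add: W_def)
    fix c :: nat and f :: "'a \<Rightarrow> real" assume cf: "c \<in> {1, 2, 3}" "f \<in> borel_measurable borel" "\<And>x. \<bar>f x\<bar> \<le> 1"
    have [measurable]: "W c \<in> borel_measurable borel" "w c \<in> borel_measurable borel"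
      "f \<in> borel_measurable borel"
      using cf W_meas w_meas by auto
    have "integral\<^sup>L (\<Lambda> 0) (\<lambda>x. W c x * f x) = integral\<^sup>L (\<Lambda> 0) (\<lambda>x. w c x * f x)"
    proof (rule integral_cong_AE)
      show "(\<lambda>x. W c x * f x) \<in> borel_measurable (\<Lambda> 0)" "(\<lambda>x. w c x * f x) \<in> borel_measurable (\<Lambda> 0)"
        unfolding meas_cong by measurable
      show "AE x in \<Lambda> 0. W c x * f x = w c x * f x"
        using ball by eventually_elim (simp add: W_def)
    qed
    then show "integral\<^sup>L (\<Lambda> 0) (\<lambda>x. W c x * f x) = integral\<^sup>L (\<Lambda> c) f - integral\<^sup>L (\<Lambda> 0) f"
      using w_integral[OF cf] by simp
  qed
qed

lemma positive_definite_representation_nondegenerate: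
  assumes pd: "positive_definite \<phi>" and a0: "0 < fst (\<phi> 0)"
  obtains \<mu> where "sphere_measure \<mu>" "\<And>n. \<phi> n = integral\<^sup>L \<mu> (\<lambda>s. qpowi s n)"
proof -
  obtain \<Lambda> where distr: "\<And>c. c < 4 \<Longrightarrow> real_distribution (\<Lambda> c)"
    and cos: "\<And>c n. c < 4 \<Longrightarrow> integral\<^sup>L (\<Lambda> c) (\<lambda>t. cos (of_int n * t)) = fst (\<phi> n) / fst (\<phi> 0)"
    and sin: "\<And>c n. c < 4 \<Longrightarrow> integral\<^sup>L (\<Lambda> c) (\<lambda>t. sin (of_int n * t)) = qim c (\<phi> n) / fst (\<phi> 0)"
    and cone: "\<And>f. continuous_on UNIV f \<Longrightarrow> (\<And>x. 0 \<le> f x \<and> f x \<le> 1) \<Longrightarrow>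
      lorentz_cone (integral\<^sup>L (\<Lambda> 0) f) (integral\<^sup>L (\<Lambda> 1) f - integral\<^sup>L (\<Lambda> 0) f)
        (integral\<^sup>L (\<Lambda> 2) f - integral\<^sup>L (\<Lambda> 0) f) (integral\<^sup>L (\<Lambda> 3) f - integral\<^sup>L (\<Lambda> 0) f)"
    using positive_definite_limit_measures[OF pd a0] by blast
  have sets: "sets (\<Lambda> c) = sets borel" and fin: "finite_measure (\<Lambda> c)" if "c < 4" for c
  proof -
    interpret real_distribution "\<Lambda> c" by (rule distr[OF that])
    show "sets (\<Lambda> c) = sets borel" "finite_measure (\<Lambda> c)" by (simp, rule finite_measure_axioms)
  qed
  obtain W :: "nat \<Rightarrow> real \<Rightarrow> real" where W_meas: "\<And>c. c \<in> {1, 2, 3} \<Longrightarrow> W c \<in> borel_measurable borel"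
    and W_ball: "\<And>x. (W 1 x)\<^sup>2 + (W 2 x)\<^sup>2 + (W 3 x)\<^sup>2 \<le> 1"
    and W_integral: "\<And>c f. c \<in> {1, 2, 3} \<Longrightarrow> f \<in> borel_measurable borel \<Longrightarrow> (\<And>x. \<bar>f x\<bar> \<le> 1) \<Longrightarrow>
      integral\<^sup>L (\<Lambda> 0) (\<lambda>x. W c x * f x) = integral\<^sup>L (\<Lambda> c) f - integral\<^sup>L (\<Lambda> 0) f"
    using lorentz_cone_measures_direction_field[OF sets fin cone] by blast
  have "W 1 \<in> borel_measurable borel" "W 2 \<in> borel_measurable borel" "W 3 \<in> borel_measurable borel"
    using W_meas by auto
  from sphere_measure_mixing_circles[OF distr[of 0] _ this W_ball, of "fst (\<phi> 0)"] a0
  obtain \<mu> where \<mu>: "sphere_measure \<mu>"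
    and moments: "\<And>n. integral\<^sup>L \<mu> (\<lambda>s. qpowi s n) = (fst (\<phi> 0) * integral\<^sup>L (\<Lambda> 0) (\<lambda>t. cos (of_int n * t)),
      fst (\<phi> 0) * integral\<^sup>L (\<Lambda> 0) (\<lambda>t. W 1 t * sin (of_int n * t)),
      fst (\<phi> 0) * integral\<^sup>L (\<Lambda> 0) (\<lambda>t. W 2 t * sin (of_int n * t)),
      fst (\<phi> 0) * integral\<^sup>L (\<Lambda> 0) (\<lambda>t. W 3 t * sin (of_int n * t)))"
    by auto
  have "fst (\<phi> 0) * integral\<^sup>L (\<Lambda> 0) (\<lambda>t. W c t * sin (of_int n * t)) = qim c (\<phi> n)"
    if "c \<in> {1, 2, 3}" for c n
    using W_integral[OF that, of "\<lambda>t. sin (of_int n * t)"] sin[of c n] sin[of 0 n] that a0 by auto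
  with cos[of 0] a0 have "\<phi> n = integral\<^sup>L \<mu> (\<lambda>s. qpowi s n)" for n
    by (subst quat_eq_qim) (simp add: moments)
  with \<mu> show ?thesis by (rule that)
qed

lemma positive_definite_representation:
  assumes pd: "positive_definite \<phi>"
  obtains \<mu> where "sphere_measure \<mu>" "\<And>n. \<phi> n = integral\<^sup>L \<mu> (\<lambda>s. qpowi s n)"
proof -
  obtain a0 where "a0 \<ge> 0" and \<phi>0: "\<phi> 0 = (a0, 0, 0, 0)" using positive_definite_at_0[OF pd] by blast
  show ?thesis
  proof (cases "a0 = 0")
    case True
    then have "\<phi> n = 0" for n using positive_definite_vanishing[OF pd] \<phi>0 by (simp add: zero_prod_def)
    moreover have "sphere_measure (null_measure borel)"
      by (simp add: sphere_measure_def finite_measureI)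
    ultimately show ?thesis by (intro that) auto
  next
    case False
    with \<open>a0 \<ge> 0\<close> \<phi>0 have "0 < fst (\<phi> 0)" by simp
    with pd show ?thesis using positive_definite_representation_nondegenerate that by blast
  qed
qed

theorem mainTheorem9:
  fixes \<phi> :: "int \<Rightarrow> quat"
  shows "positive_definite \<phi> \<longleftrightarrow>
    (\<exists>\<mu> :: quat measure.
       sets \<mu> = sets borel \<and> finite_measure \<mu> \<and> emeasure \<mu> (- qsphere) = 0 \<and>
       (\<forall>n::int. \<phi> n = integral\<^sup>L \<mu> (\<lambda>s. qpowi s n)))"
proof
  assume "positive_definite \<phi>"
  then obtain \<mu> where "sphere_measure \<mu>" "\<And>n. \<phi> n = integral\<^sup>L \<mu> (\<lambda>s. qpowi s n)"
    using positive_definite_representation by blast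
  then show "\<exists>\<mu> :: quat measure. sets \<mu> = sets borel \<and> finite_measure \<mu> \<and> emeasure \<mu> (- qsphere) = 0 \<and>
      (\<forall>n. \<phi> n = integral\<^sup>L \<mu> (\<lambda>s. qpowi s n))"
    by (auto simp: sphere_measure_def)
next
  assume "\<exists>\<mu> :: quat measure. sets \<mu> = sets borel \<and> finite_measure \<mu> \<and> emeasure \<mu> (- qsphere) = 0 \<and>
      (\<forall>n. \<phi> n = integral\<^sup>L \<mu> (\<lambda>s. qpowi s n))"
  then obtain \<mu> where "sphere_measure \<mu>" and "\<phi> = (\<lambda>n. integral\<^sup>L \<mu> (\<lambda>s. qpowi s n))"
    by (auto simp: sphere_measure_def)
  then show "positive_definite \<phi>" using positive_definite_moments by simp
qed

end
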